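(* Let $H$ be the hinge and $r=2$. The node-weights $w=(w_1,w_2,w_3)=(4,2,1)$ and $w'=(1,2,4)$ both yield, via $\lambda_i=w_i/z_i^2$ with $z_i=\sum_{j\in N(i)}w_j$, an activity vector proportional to $(49,18,49)$; consequently the $2$-branching $w$-random walk and the $2$-branching $w'$-random walk induce two distinct simple, invariant Gibbs measures on $\hom(\mathbb{T}^2,H)$ for the activity vector $\lambda=(49,18,49)$.
   Context: The hinge is the constraint graph with nodes $1$ (green), $2$ (yellow), $3$ (red), each node looped, and edges $\{1,2\},\{2,3\}$ (no edge between $1$ and $3$). $N(i)$ is the set of nodes adjacent to $i$ (including $i$ if looped). $\mathbb{T}^2$ is the infinite connected cycle-free graph with all degrees $3$. For positive weights $w$ the $2$-branching $w$-random walk induces the law on $\hom(\mathbb{T}^2,H)$ obtained by fixing a root $x$, choosing $\varphi(x)=i$ with probability $\propto w_iz_i$, and giving each non-root site $v$ with parent $u$ spin $j\in N(\varphi(u))$ with probability $w_j/z_{\varphi(u)}$, independently given $\varphi(u)$. Activity vectors are positive vectors indexed by nodes; Gibbs measures for $\lambda$ are probability measures on $\hom(\mathbb{T}^2,H)$ whose conditional law on each finite set $U$ of sites, given the configuration outside $U$, is a.s. the conditional law under the finite measure on $\hom(U\cup\partial U,H)$ with weights $\prod_v\lambda_{\varphi(v)}$ given the values on $\partial U$ (the sites outside $U$ adjacent to $U$). A Gibbs measure on a tree is simple if the restrictions to the components of $T\setminus\{u\}$ are conditionally independent given $\varphi(u)$, for every site $u$; it is invariant if preserved by all automorphisms of the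 tree. *)

theory Defs
  imports "HOL-Probability.Probability"
begin

definition hnodes :: "nat set" where "hnodes = {1,2,3}"

definition hadj :: "nat \<Rightarrow> nat \<Rightarrow> bool" where
  "hadj i j \<longleftrightarrow> i \<in> hnodes \<and> j \<in> hnodes \<and>
     (i = j \<or> {i,j} = {1,2} \<or> {i,j} = {2,3})"

definition hN :: "nat \<Rightarrow> nat set" where "hN i = {j \<in> hnodes. hadj i j}"

definition hz :: "(nat \<Rightarrow> real) \<Rightarrow> nat \<Rightarrow> real" where
  "hz w i = (\<Sum>j\<in>hN i. w j)"

definition lam_of :: "(nat \<Rightarrow> real) \<Rightarrow> nat \<Rightarrow> real" where
  "lam_of w i = w i / (hz w i)^2"

section \<open>The 3-regular tree T^2 (reduced words over three letters)\<close>

typedef tvert = "{xs :: nat list. set xs \<subseteq> {0,1,2} \<and>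
                     (\<forall>i. Suc i < length xs \<longrightarrow> xs ! i \<noteq> xs ! Suc i)}"
  by (rule exI[of _ "[]"]) auto

definition tadj :: "tvert \<Rightarrow> tvert \<Rightarrow> bool" where
  "tadj a b \<longleftrightarrow> (\<exists>c. Rep_tvert b = Rep_tvert a @ [c]) \<or> (\<exists>c. Rep_tvert a = Rep_tvert b @ [c])"

definition tcomp :: "tvert \<Rightarrow> tvert \<Rightarrow> tvert set" where
  "tcomp u v = {y. (\<lambda>a b. tadj a b \<and> a \<noteq> u \<and> b \<noteq> u)\<^sup>*\<^sup>* v y}"

definition tparent :: "tvert \<Rightarrow> tvert \<Rightarrow> tvert" where
  "tparent x v = (THE u. tadj v u \<and> x \<in> tcomp v u)"

definition tree_aut :: "(tvert \<Rightarrow> tvert) \<Rightarrow> bool" where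
  "tree_aut \<sigma> \<longleftrightarrow> bij \<sigma> \<and> (\<forall>a b. tadj a b \<longleftrightarrow> tadj (\<sigma> a) (\<sigma> b))"

definition cfg_space :: "(tvert \<Rightarrow> nat) measure" where
  "cfg_space = PiM UNIV (\<lambda>_. count_space hnodes)"

definition hom_set :: "(tvert \<Rightarrow> nat) set" where
  "hom_set = {\<phi>. \<forall>a b. tadj a b \<longrightarrow> hadj (\<phi> a) (\<phi> b)}"

definition merge_cfg :: "tvert set \<Rightarrow> (tvert \<Rightarrow> nat) \<Rightarrow> (tvert \<Rightarrow> nat) \<Rightarrow> tvert \<Rightarrow> nat" where
  "merge_cfg U \<eta> \<omega> = (\<lambda>v. if v \<in> U then \<eta> v else \<omega> v)"

text \<open>Weight of the configuration eta on U given the boundary values of omega on dU: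
  product of activities over U (the factor for dU is common and cancels),
  provided the combined configuration is a homomorphism on U \<union> dU.\<close>
definition spec_weight :: "(nat \<Rightarrow> real) \<Rightarrow> tvert set \<Rightarrow> (tvert \<Rightarrow> nat) \<Rightarrow> (tvert \<Rightarrow> nat) \<Rightarrow> real" where
  "spec_weight lam U \<omega> \<eta> =
     (if (\<forall>a b. a \<in> U \<and> tadj a b \<longrightarrow> hadj (merge_cfg U \<eta> \<omega> a) (merge_cfg U \<eta> \<omega> b))
      then (\<Prod>v\<in>U. lam (\<eta> v)) else 0)"

definition spec_Z :: "(nat \<Rightarrow> real) \<Rightarrow> tvert set \<Rightarrow> (tvert \<Rightarrow> nat) \<Rightarrow> real" where
  "spec_Z lam U \<omega> = (\<Sum>\<eta>\<in>PiE U (\<lambda>_. hnodes). spec_weight lam U \<omega> \<eta>)"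

definition gibbs :: "(nat \<Rightarrow> real) \<Rightarrow> (tvert \<Rightarrow> nat) measure \<Rightarrow> bool" where
  "gibbs lam \<mu> \<longleftrightarrow> prob_space \<mu> \<and> sets \<mu> = sets cfg_space \<and> emeasure \<mu> hom_set = 1 \<and>
     (\<forall>U A. finite U \<longrightarrow> A \<in> sets cfg_space \<longrightarrow>
        measure \<mu> A = (\<integral>\<omega>. (\<Sum>\<eta>\<in>PiE U (\<lambda>_. hnodes).
             spec_weight lam U \<omega> \<eta> / spec_Z lam U \<omega> * indicator A (merge_cfg U \<eta> \<omega>)) \<partial>\<mu>))"

definition comp_events :: "tvert set \<Rightarrow> (tvert \<Rightarrow> nat) set set" where
  "comp_events C = {A \<in> sets cfg_space. \<forall>\<phi> \<psi>. \<phi> \<in> space cfg_space \<longrightarrow> \<psi> \<in> space cfg_space \<longrightarrow>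
       (\<forall>v\<in>C. \<phi> v = \<psi> v) \<longrightarrow> (\<phi> \<in> A \<longleftrightarrow> \<psi> \<in> A)}"

definition simple_gibbs :: "(nat \<Rightarrow> real) \<Rightarrow> (tvert \<Rightarrow> nat) measure \<Rightarrow> bool" where
  "simple_gibbs lam \<mu> \<longleftrightarrow> gibbs lam \<mu> \<and>
     (\<forall>u i. measure \<mu> {\<phi> \<in> space \<mu>. \<phi> u = i} > 0 \<longrightarrow>
        prob_space.indep_sets (uniform_measure \<mu> {\<phi> \<in> space \<mu>. \<phi> u = i})
          (\<lambda>v. comp_events (tcomp u v)) {v. tadj u v})"

definition invariant_measure :: "(tvert \<Rightarrow> nat) measure \<Rightarrow> bool" where
  "invariant_measure \<mu> \<longleftrightarrow> (\<forall>\<sigma>. tree_aut \<sigma> \<longrightarrow> distr \<mu> cfg_space (\<lambda>\<phi>. \<phi> \<circ> \<sigma>) = \<mu>)"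

definition root_prob :: "(nat \<Rightarrow> real) \<Rightarrow> nat \<Rightarrow> real" where
  "root_prob w i = (if i \<in> hnodes then w i * hz w i / (\<Sum>k\<in>hnodes. w k * hz w k) else 0)"

definition step_prob :: "(nat \<Rightarrow> real) \<Rightarrow> nat \<Rightarrow> nat \<Rightarrow> real" where
  "step_prob w i j = (if hadj i j then w j / hz w i else 0)"

definition walk_law :: "(nat \<Rightarrow> real) \<Rightarrow> tvert \<Rightarrow> (tvert \<Rightarrow> nat) measure \<Rightarrow> bool" where
  "walk_law w x \<mu> \<longleftrightarrow> prob_space \<mu> \<and> sets \<mu> = sets cfg_space \<and>
     (\<forall>S \<eta>. finite S \<and> x \<in> S \<and> (\<forall>v\<in>S - {x}. tparent x v \<in> S) \<longrightarrow>
        measure \<mu> {\<phi> \<in> space \<mu>. \<forall>v\<in>S. \<phi> v = \<eta> v} =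
          root_prob w (\<eta> x) * (\<Prod>v\<in>S - {x}. step_prob w (\<eta> (tparent x v)) (\<eta> v)))"

definition wA :: "nat \<Rightarrow> real" where
  "wA i = (if i = 1 then 4 else if i = 2 then 2 else if i = 3 then 1 else 0)"
definition wB :: "nat \<Rightarrow> real" where
  "wB i = (if i = 1 then 1 else if i = 2 then 2 else if i = 3 then 4 else 0)"
definition lamT :: "nat \<Rightarrow> real" where
  "lamT i = (if i = 1 then 49 else if i = 2 then 18 else if i = 3 then 49 else 0)"

end

theory Submission
  imports Defs
begin

text \<open>
  The \<open>w\<close>-random walk is reversible: its root law \<open>w\<^sub>i z\<^sub>i\<close> and its transition
  probabilities \<open>w\<^sub>j / z\<^sub>i\<close> satisfy detailed balance, \<open>w\<^sub>i z\<^sub>i \<cdot> w\<^sub>j / z\<^sub>i = w\<^sub>i w\<^sub>j\<close>.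
  So its law does not depend on the root, and as the automorphisms of the tree act
  transitively (the tree is the Cayley graph of \<open>\<int>\<^sub>2 * \<int>\<^sub>2 * \<int>\<^sub>2\<close>), the law is invariant.
  Conditionally on the spin at a site the walk proceeds independently into the three
  branches at that site, which is simplicity.  For the DLR equations, write the probability of
  a configuration on a large ball as a product of edge factors \<open>w\<^sub>j / z\<^sub>i\<close> and distribute
  them to the sites: every interior site, having degree 3, receives \<open>w\<^sub>j / z\<^sub>j\<^sup>2 = \<lambda>\<^sub>j\<close>
  (up to a common constant), so conditioning on the outside of a finite set gives the Gibbs
  specification.  Both weight vectors give \<open>\<lambda> = (49, 18, 49) / 441\<close>, but the root has spin 1
  with probability \<open>24/41\<close> under one walk and \<open>3/41\<close> under the other.
\<close>

section \<open>The tree as the Cayley graph of a free product\<close>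

definition reduced :: "nat list \<Rightarrow> bool" where
  "reduced xs \<longleftrightarrow> set xs \<subseteq> {0,1,2} \<and> (\<forall>i. Suc i < length xs \<longrightarrow> xs ! i \<noteq> xs ! Suc i)"

lemma reduced_Rep_tvert: "reduced (Rep_tvert v)"
  using Rep_tvert[of v] unfolding reduced_def by auto

lemma Rep_Abs_tvert: "reduced xs \<Longrightarrow> Rep_tvert (Abs_tvert xs) = xs"
  by (rule Abs_tvert_inverse) (simp add: reduced_def)

lemma set_Rep_tvert: "set (Rep_tvert v) \<subseteq> {0,1,2}"
  using reduced_Rep_tvert[of v] unfolding reduced_def by auto

lemma reduced_Nil [simp]: "reduced []"
  by (simp add: reduced_def)

lemma reduced_snoc:
  "reduced (xs @ [c]) \<longleftrightarrow> reduced xs \<and> c \<in> {0,1,2} \<and> (xs \<noteq> [] \<longrightarrow> last xs \<noteq> c)"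
proof -
  have "(\<forall>i. Suc i < length (xs @ [c]) \<longrightarrow> (xs @ [c]) ! i \<noteq> (xs @ [c]) ! Suc i) \<longleftrightarrow>
        (\<forall>i. Suc i < length xs \<longrightarrow> xs ! i \<noteq> xs ! Suc i) \<and> (xs \<noteq> [] \<longrightarrow> last xs \<noteq> c)"
    (is "?L \<longleftrightarrow> ?R1 \<and> ?R2")
  proof (intro iffI conjI allI impI)
    fix i assume "?L" "Suc i < length xs"
    then show "xs ! i \<noteq> xs ! Suc i" by (auto simp: nth_append dest: spec[of _ i])
  next
    assume "?L" "xs \<noteq> []"
    then show "last xs \<noteq> c"
      by (auto simp: nth_append last_conv_nth dest: spec[of _ "length xs - 1"])
  next
    fix i assume h: "?R1 \<and> ?R2" "Suc i < length (xs @ [c])"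
    show "(xs @ [c]) ! i \<noteq> (xs @ [c]) ! Suc i"
    proof (cases "Suc i < length xs")
      case True then show ?thesis using h by (auto simp: nth_append)
    next
      case False then have "i = length xs - 1" "xs \<noteq> []" using h(2) by auto
      then show ?thesis using h by (auto simp: nth_append last_conv_nth split: if_splits)
    qed
  qed
  then show ?thesis unfolding reduced_def by auto
qed

lemma reduced_take: "reduced xs \<Longrightarrow> reduced (take k xs)"
  unfolding reduced_def by (auto dest: in_set_takeD)

lemma reduced_butlast: "reduced xs \<Longrightarrow> reduced (butlast xs)"
  by (simp add: butlast_conv_take reduced_take)

lemma reduced_appendD: "reduced (xs @ ys) \<Longrightarrow> reduced xs"
  by (metis append_eq_conv_conj reduced_take)

lemma reduced_rev: "reduced xs \<Longrightarrow> reduced (rev xs)"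
  unfolding reduced_def
proof (intro conjI allI impI)
  fix i assume h: "set xs \<subseteq> {0, 1, 2} \<and> (\<forall>i. Suc i < length xs \<longrightarrow> xs ! i \<noteq> xs ! Suc i)"
    "Suc i < length (rev xs)"
  then have "xs ! (length xs - Suc (Suc i)) \<noteq> xs ! Suc (length xs - Suc (Suc i))"
    by auto
  moreover have "Suc (length xs - Suc (Suc i)) = length xs - Suc i" using h by auto
  ultimately show "rev xs ! i \<noteq> rev xs ! Suc i" using h by (auto simp: rev_nth)
qed auto

definition troot :: tvert where
  "troot = Abs_tvert []"

lemma Rep_troot [simp]: "Rep_tvert troot = []"
  by (simp add: troot_def Rep_Abs_tvert)

lemma neq_troot_iff: "v \<noteq> troot \<longleftrightarrow> Rep_tvert v \<noteq> []"
  by (metis Rep_troot Rep_tvert_inject)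

lemma tadj_sym: "tadj a b \<longleftrightarrow> tadj b a"
  unfolding tadj_def by auto

lemma tadj_irrefl [simp]: "\<not> tadj a a"
  unfolding tadj_def by auto

definition tpar :: "tvert \<Rightarrow> tvert" where
  "tpar v = Abs_tvert (butlast (Rep_tvert v))"

lemma Rep_tpar: "Rep_tvert (tpar v) = butlast (Rep_tvert v)"
  by (simp add: tpar_def Rep_Abs_tvert reduced_butlast reduced_Rep_tvert)

lemma tadj_tpar: "v \<noteq> troot \<Longrightarrow> tadj v (tpar v)"
  unfolding tadj_def Rep_tpar neq_troot_iff by (metis append_butlast_last_id)

lemma tadj_tpar_or_child:
  "tadj v u \<Longrightarrow> u = tpar v \<and> v \<noteq> troot \<or> (\<exists>d. Rep_tvert u = Rep_tvert v @ [d])"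
  unfolding tadj_def
  by (metis Rep_tpar Rep_tvert_inverse butlast_snoc neq_troot_iff tpar_def snoc_eq_iff_butlast)

lemma tadj_tpar_cases: "tadj a b \<Longrightarrow> (a \<noteq> troot \<and> b = tpar a) \<or> (b \<noteq> troot \<and> a = tpar b)"
proof -
  assume "tadj a b"
  from tadj_tpar_or_child[OF this] show ?thesis
  proof
    assume "\<exists>d. Rep_tvert b = Rep_tvert a @ [d]"
    then obtain d where d: "Rep_tvert b = Rep_tvert a @ [d]" by blast
    then have "b \<noteq> troot" by (simp add: neq_troot_iff)
    moreover have "a = tpar b" using d by (simp add: tpar_def Rep_tvert_inverse)
    ultimately show ?thesis by simp
  qed simp
qed

definition tgen :: "nat \<Rightarrow> tvert" where
  "tgen c = Abs_tvert [c]"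

lemma Rep_tgen: "c \<in> {0,1,2} \<Longrightarrow> Rep_tvert (tgen c) = [c]"
  unfolding tgen_def by (rule Rep_Abs_tvert) (simp add: reduced_def)

lemma tgen_neq_troot: "c \<in> {0,1,2} \<Longrightarrow> tgen c \<noteq> troot"
  by (simp add: neq_troot_iff Rep_tgen)

lemma tpar_tgen: "c \<in> {0,1,2} \<Longrightarrow> tpar (tgen c) = troot"
  by (metis Rep_tgen Rep_tpar Rep_troot Rep_tvert_inject butlast.simps(2))

lemma tadj_troot_tgen: "c \<in> {0,1,2} \<Longrightarrow> tadj troot (tgen c)"
  by (simp add: tadj_def Rep_tgen)

text \<open>Reduced words are the elements of \<open>\<int>\<^sub>2 * \<int>\<^sub>2 * \<int>\<^sub>2\<close>, and the neighbours of a word are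
  its products with the three generators.\<close>
definition mult_gen :: "nat list \<Rightarrow> nat \<Rightarrow> nat list" where
  "mult_gen y c = (if y \<noteq> [] \<and> last y = c then butlast y else y @ [c])"

lemma reduced_mult_gen: "reduced y \<Longrightarrow> c \<in> {0,1,2} \<Longrightarrow> reduced (mult_gen y c)"
  unfolding mult_gen_def by (auto simp: reduced_butlast reduced_snoc)

lemma reduced_foldl_mult_gen: "reduced x \<Longrightarrow> set v \<subseteq> {0,1,2} \<Longrightarrow> reduced (foldl mult_gen x v)"
  by (induction v arbitrary: x) (auto simp: reduced_mult_gen)

lemma mult_gen_mult_gen: "reduced y \<Longrightarrow> mult_gen (mult_gen y c) c = y"
proof (cases "y \<noteq> [] \<and> last y = c")
  case True
  assume "reduced y"
  moreover obtain y' where y': "y = y' @ [c]" using True by (metis append_butlast_last_id)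
  ultimately have "y' \<noteq> [] \<longrightarrow> last y' \<noteq> c" by (simp add: reduced_snoc)
  then show ?thesis using y' by (auto simp: mult_gen_def)
qed (auto simp: mult_gen_def)

lemma tadj_iff_mult_gen: "tadj a b \<longleftrightarrow> (\<exists>c\<in>{0,1,2}. Rep_tvert b = mult_gen (Rep_tvert a) c)"
proof
  assume "tadj a b"
  then consider c where "Rep_tvert b = Rep_tvert a @ [c]" | c where "Rep_tvert a = Rep_tvert b @ [c]"
    unfolding tadj_def by blast
  then show "\<exists>c\<in>{0,1,2}. Rep_tvert b = mult_gen (Rep_tvert a) c"
  proof cases
    case (1 c)
    then show ?thesis using reduced_Rep_tvert[of b] by (auto simp: reduced_snoc mult_gen_def)
  next
    case (2 c)
    then show ?thesis using reduced_Rep_tvert[of a] by (auto simp: reduced_snoc mult_gen_def)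
  qed
next
  assume "\<exists>c\<in>{0,1,2}. Rep_tvert b = mult_gen (Rep_tvert a) c"
  then show "tadj a b" unfolding tadj_def mult_gen_def
    by (metis append_butlast_last_id)
qed

lemma foldl_mult_gen_mult_gen:
  assumes "reduced b" "c \<in> {0,1,2}" "reduced a"
  shows "foldl mult_gen a (mult_gen b c) = mult_gen (foldl mult_gen a b) c"
proof (cases "b \<noteq> [] \<and> last b = c")
  case True
  then obtain b' where b': "b = b' @ [c]" by (metis append_butlast_last_id)
  have "reduced b'" using assms(1) unfolding b' by (rule reduced_appendD)
  then have "reduced (foldl mult_gen a b')"
    using assms(3) by (intro reduced_foldl_mult_gen) (auto simp: reduced_def)
  moreover have "mult_gen b c = b'" using b' by (simp add: mult_gen_def)
  moreover have "foldl mult_gen a b = mult_gen (foldl mult_gen a b') c" using b' by simp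
  ultimately show ?thesis by (simp add: mult_gen_mult_gen)
qed (auto simp: mult_gen_def)

lemma foldl_mult_gen_assoc:
  "reduced a \<Longrightarrow> reduced b \<Longrightarrow> set c \<subseteq> {0,1,2} \<Longrightarrow>
   foldl mult_gen a (foldl mult_gen b c) = foldl mult_gen (foldl mult_gen a b) c"
  by (induction c arbitrary: b) (simp_all add: reduced_mult_gen foldl_mult_gen_mult_gen)

lemma foldl_mult_gen_rev_self: "foldl mult_gen (rev x) x = []"
  by (induction x) (simp_all add: mult_gen_def)

lemma foldl_mult_gen_self_rev: "foldl mult_gen x (rev x) = []"
  by (induction x rule: rev_induct) (simp_all add: mult_gen_def)

lemma foldl_mult_gen_Nil: "reduced v \<Longrightarrow> foldl mult_gen [] v = v"
  by (induction v rule: rev_induct) (auto simp: reduced_snoc mult_gen_def)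

text \<open>The left multiplications act transitively on the tree; this reduces statements about
  an arbitrary site to statements about the root.\<close>
definition tmult :: "tvert \<Rightarrow> tvert \<Rightarrow> tvert" where
  "tmult x v = Abs_tvert (foldl mult_gen (Rep_tvert x) (Rep_tvert v))"

definition tinv :: "tvert \<Rightarrow> tvert" where
  "tinv x = Abs_tvert (rev (Rep_tvert x))"

lemma Rep_tmult: "Rep_tvert (tmult x v) = foldl mult_gen (Rep_tvert x) (Rep_tvert v)"
  unfolding tmult_def
  by (intro Rep_Abs_tvert reduced_foldl_mult_gen reduced_Rep_tvert set_Rep_tvert)

lemma Rep_tinv: "Rep_tvert (tinv x) = rev (Rep_tvert x)"
  unfolding tinv_def by (simp add: Rep_Abs_tvert reduced_rev reduced_Rep_tvert)

lemma tmult_tinv_left: "tmult (tinv x) (tmult x v) = v"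
proof -
  have "Rep_tvert (tmult (tinv x) (tmult x v)) =
      foldl mult_gen (rev (Rep_tvert x)) (foldl mult_gen (Rep_tvert x) (Rep_tvert v))"
    by (simp add: Rep_tmult Rep_tinv)
  also have "\<dots> = Rep_tvert v"
    by (subst foldl_mult_gen_assoc[OF reduced_rev[OF reduced_Rep_tvert] reduced_Rep_tvert set_Rep_tvert])
      (simp add: foldl_mult_gen_rev_self foldl_mult_gen_Nil reduced_Rep_tvert)
  finally show ?thesis by (simp add: Rep_tvert_inject)
qed

lemma tmult_tinv_right: "tmult x (tmult (tinv x) v) = v"
proof -
  have "Rep_tvert (tmult x (tmult (tinv x) v)) =
      foldl mult_gen (Rep_tvert x) (foldl mult_gen (rev (Rep_tvert x)) (Rep_tvert v))"
    by (simp add: Rep_tmult Rep_tinv)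
  also have "\<dots> = Rep_tvert v"
    by (subst foldl_mult_gen_assoc[OF reduced_Rep_tvert reduced_rev[OF reduced_Rep_tvert] set_Rep_tvert])
      (simp add: foldl_mult_gen_self_rev foldl_mult_gen_Nil reduced_Rep_tvert)
  finally show ?thesis by (simp add: Rep_tvert_inject)
qed

lemma tmult_troot: "tmult x troot = x"
  by (simp add: tmult_def Rep_tvert_inverse)

lemma tadj_tmult: "tadj a b \<Longrightarrow> tadj (tmult x a) (tmult x b)"
  unfolding tadj_iff_mult_gen Rep_tmult
  by (auto simp: foldl_mult_gen_mult_gen reduced_Rep_tvert)

lemma tree_aut_tmult: "tree_aut (tmult x)"
  unfolding tree_aut_def
proof (intro conjI allI iffI)
  show "bij (tmult x)"
    by (rule o_bij[of "tmult (tinv x)"]) (auto simp: tmult_tinv_left tmult_tinv_right fun_eq_iff)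
next
  fix a b assume "tadj (tmult x a) (tmult x b)"
  then have "tadj (tmult (tinv x) (tmult x a)) (tmult (tinv x) (tmult x b))" by (rule tadj_tmult)
  then show "tadj a b" by (simp add: tmult_tinv_left)
qed (rule tadj_tmult)

lemma tadj_troot_imp_tgen: "tadj troot v \<Longrightarrow> \<exists>c\<in>{0,1,2}. v = tgen c"
proof -
  assume "tadj troot v"
  then obtain c where c: "c \<in> {0,1,2}" "Rep_tvert v = mult_gen [] c" unfolding tadj_iff_mult_gen by auto
  then have "Rep_tvert v = [c]" by (simp add: mult_gen_def)
  then show ?thesis using c(1) by (metis Rep_tgen Rep_tvert_inject)
qed

lemma tadj_imp_tmult_tgen: "tadj x y \<Longrightarrow> \<exists>c\<in>{0,1,2}. y = tmult x (tgen c)"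
  using tadj_troot_imp_tgen tadj_tmult[of x y "tinv x"]
  by (metis tmult_tinv_left tmult_tinv_right tmult_troot)

lemma tree_aut_bij: "tree_aut \<sigma> \<Longrightarrow> bij \<sigma>"
  by (simp add: tree_aut_def)

lemma tree_aut_tadj_iff: "tree_aut \<sigma> \<Longrightarrow> tadj (\<sigma> a) (\<sigma> b) \<longleftrightarrow> tadj a b"
  by (simp add: tree_aut_def)

lemma tree_aut_inv_apply: "tree_aut \<sigma> \<Longrightarrow> inv \<sigma> (\<sigma> x) = x"
  by (simp add: tree_aut_bij bij_is_inj)

lemma tree_aut_apply_inv: "tree_aut \<sigma> \<Longrightarrow> \<sigma> (inv \<sigma> x) = x"
  by (simp add: tree_aut_bij bij_is_surj surj_f_inv_f)

lemma tree_aut_eq_iff: "tree_aut \<sigma> \<Longrightarrow> \<sigma> a = \<sigma> b \<longleftrightarrow> a = b"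
  using tree_aut_inv_apply by metis

lemma tree_aut_inv:
  assumes "tree_aut \<sigma>"
  shows "tree_aut (inv \<sigma>)"
proof -
  have "tadj a b \<longleftrightarrow> tadj (inv \<sigma> a) (inv \<sigma> b)" for a b
    using tree_aut_tadj_iff[OF assms, of "inv \<sigma> a" "inv \<sigma> b"] by (simp add: tree_aut_apply_inv[OF assms])
  then show ?thesis unfolding tree_aut_def using bij_imp_bij_inv[OF tree_aut_bij[OF assms]] by blast
qed

definition tadj_avoiding :: "tvert \<Rightarrow> tvert \<Rightarrow> tvert \<Rightarrow> bool" where
  "tadj_avoiding u a b \<longleftrightarrow> tadj a b \<and> a \<noteq> u \<and> b \<noteq> u"

lemma tcomp_rtranclp: "tcomp u v = {y. (tadj_avoiding u)\<^sup>*\<^sup>* v y}"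
  unfolding tcomp_def tadj_avoiding_def by simp

lemma tcomp_self: "v \<in> tcomp u v"
  unfolding tcomp_rtranclp by simp

lemma tcomp_extend: "y \<in> tcomp u v \<Longrightarrow> tadj y z \<Longrightarrow> y \<noteq> u \<Longrightarrow> z \<noteq> u \<Longrightarrow> z \<in> tcomp u v"
  unfolding tcomp_rtranclp by (auto intro: rtranclp.rtrancl_into_rtrancl simp: tadj_avoiding_def)

lemma notin_tcomp_self: "tadj u v \<Longrightarrow> u \<notin> tcomp u v"
proof
  assume "tadj u v" "u \<in> tcomp u v"
  then have "(tadj_avoiding u)\<^sup>*\<^sup>* v u" by (simp add: tcomp_rtranclp)
  then show False
    using \<open>tadj u v\<close> by (cases rule: rtranclp.cases) (auto simp: tadj_avoiding_def)
qed

lemma tcomp_tree_aut: "tree_aut \<sigma> \<Longrightarrow> tcomp (\<sigma> u) (\<sigma> v) = \<sigma> ` tcomp u v"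
proof -
  assume s: "tree_aut \<sigma>"
  have path: "(tadj_avoiding (\<tau> u))\<^sup>*\<^sup>* (\<tau> a) (\<tau> b)"
    if "tree_aut \<tau>" "(tadj_avoiding u)\<^sup>*\<^sup>* a b" for \<tau> u a b
    using that(2) by induction
      (auto simp: tadj_avoiding_def tree_aut_tadj_iff[OF that(1)] tree_aut_eq_iff[OF that(1)]
        intro: rtranclp.rtrancl_into_rtrancl)
  have "y \<in> \<sigma> ` tcomp u v" if "y \<in> tcomp (\<sigma> u) (\<sigma> v)" for y
  proof -
    have "(tadj_avoiding (inv \<sigma> (\<sigma> u)))\<^sup>*\<^sup>* (inv \<sigma> (\<sigma> v)) (inv \<sigma> y)"
      using that path[OF tree_aut_inv[OF s]] by (simp add: tcomp_rtranclp)
    then have "inv \<sigma> y \<in> tcomp u v" by (simp add: tcomp_rtranclp tree_aut_inv_apply[OF s])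
    then show ?thesis by (metis tree_aut_apply_inv[OF s] imageI)
  qed
  moreover have "\<sigma> ` tcomp u v \<subseteq> tcomp (\<sigma> u) (\<sigma> v)"
    using path[OF s] by (auto simp: tcomp_rtranclp)
  ultimately show ?thesis by blast
qed

lemma tree_aut_mem_tcomp_iff: "tree_aut \<sigma> \<Longrightarrow> \<sigma> x \<in> tcomp (\<sigma> u) (\<sigma> v) \<longleftrightarrow> x \<in> tcomp u v"
  by (simp add: tcomp_tree_aut inj_image_mem_iff bij_is_inj tree_aut_bij)

lemma tcomp_child_prefix:
  assumes "Rep_tvert c = Rep_tvert v @ [d]" "y \<in> tcomp v c"
  shows "prefix (Rep_tvert v @ [d]) (Rep_tvert y)"
proof -
  have "(tadj_avoiding v)\<^sup>*\<^sup>* c y" using assms(2) unfolding tcomp_rtranclp by simp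
  then show ?thesis
  proof induction
    case base then show ?case using assms(1) by simp
  next
    case (step y z)
    then have "tadj y z" "z \<noteq> v" by (auto simp: tadj_avoiding_def)
    then consider e where "Rep_tvert z = Rep_tvert y @ [e]" | e where "Rep_tvert y = Rep_tvert z @ [e]"
      unfolding tadj_def by blast
    then show ?case
    proof cases
      case 1 then show ?thesis using step.IH by (auto simp: prefix_def)
    next
      case (2 e)
      then have "Rep_tvert y \<noteq> Rep_tvert v @ [d]" using \<open>z \<noteq> v\<close> Rep_tvert_inject by auto
      then show ?thesis using step.IH 2 by (metis prefix_snoc)
    qed
  qed
qed

lemma tcomp_troot_tgen_prefix: "c \<in> {0,1,2} \<Longrightarrow> y \<in> tcomp troot (tgen c) \<Longrightarrow> prefix [c] (Rep_tvert y)"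
  using tcomp_child_prefix[of "tgen c" troot c y] by (simp add: Rep_tgen)

lemma avoiding_path_to_troot:
  "length (Rep_tvert y) < length (Rep_tvert v) \<Longrightarrow> (tadj_avoiding v)\<^sup>*\<^sup>* y troot"
proof (induction "length (Rep_tvert y)" arbitrary: y)
  case 0 then have "y = troot" by (metis Rep_troot Rep_tvert_inject length_0_conv)
  then show ?case by simp
next
  case (Suc n)
  then have y: "y \<noteq> troot" by (auto simp: neq_troot_iff)
  have "(tadj_avoiding v)\<^sup>*\<^sup>* (tpar y) troot" using Suc by (simp add: Rep_tpar)
  moreover have "tadj_avoiding v y (tpar y)"
    unfolding tadj_avoiding_def using tadj_tpar[OF y] Suc(2,3) by (auto simp: Rep_tpar)
  ultimately show ?case by (meson converse_rtranclp_into_rtranclp)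
qed

lemma troot_in_tcomp_tpar:
  "v \<noteq> troot \<Longrightarrow> tadj v (tpar v) \<and> troot \<in> tcomp v (tpar v)"
  using tadj_tpar avoiding_path_to_troot[of "tpar v" v]
  by (auto simp: tcomp_rtranclp Rep_tpar neq_troot_iff)

lemma troot_in_tcomp_imp_tpar:
  "tadj v u \<Longrightarrow> troot \<in> tcomp v u \<Longrightarrow> u = tpar v"
  using tadj_tpar_or_child[of v u] tcomp_child_prefix[of u v _ troot]
  by (auto simp: prefix_def)

text \<open>The parent of \<open>v\<close> towards \<open>x\<close> is well defined: for \<open>x\<close> the root this is the word
  with the last letter removed, and left multiplication transports it to every \<open>x\<close>.\<close>
lemma ex1_toward: "v \<noteq> x \<Longrightarrow> \<exists>!u. tadj v u \<and> x \<in> tcomp v u"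
proof -
  assume "v \<noteq> x"
  let ?\<sigma> = "tmult x" and ?v = "tmult (tinv x) v"
  have \<sigma>: "tree_aut ?\<sigma>" by (rule tree_aut_tmult)
  have "?v \<noteq> troot" using \<open>v \<noteq> x\<close> by (metis tmult_tinv_right tmult_troot)
  then have root: "\<exists>!u. tadj ?v u \<and> troot \<in> tcomp ?v u"
    using troot_in_tcomp_tpar troot_in_tcomp_imp_tpar by blast
  have "\<exists>!u. tadj (?\<sigma> ?v) u \<and> ?\<sigma> troot \<in> tcomp (?\<sigma> ?v) u"
  proof -
    from root obtain u where u: "tadj ?v u \<and> troot \<in> tcomp ?v u" by blast
    show ?thesis
    proof (rule ex1I[of _ "?\<sigma> u"])
      show "tadj (?\<sigma> ?v) (?\<sigma> u) \<and> ?\<sigma> troot \<in> tcomp (?\<sigma> ?v) (?\<sigma> u)"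
        using u by (simp add: tree_aut_tadj_iff[OF \<sigma>] tree_aut_mem_tcomp_iff[OF \<sigma>])
      fix u' assume "tadj (?\<sigma> ?v) u' \<and> ?\<sigma> troot \<in> tcomp (?\<sigma> ?v) u'"
      then have "tadj ?v (inv ?\<sigma> u') \<and> troot \<in> tcomp ?v (inv ?\<sigma> u')"
        by (metis tree_aut_apply_inv[OF \<sigma>] tree_aut_tadj_iff[OF \<sigma>] tree_aut_mem_tcomp_iff[OF \<sigma>])
      then have "inv ?\<sigma> u' = u" using root u by blast
      then show "u' = ?\<sigma> u" using tree_aut_apply_inv[OF \<sigma>] by metis
    qed
  qed
  then show ?thesis by (simp add: tmult_tinv_right tmult_troot)
qed

lemma tparent_eqI: "v \<noteq> x \<Longrightarrow> tadj v u \<Longrightarrow> x \<in> tcomp v u \<Longrightarrow> tparent x v = u"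
  unfolding tparent_def by (rule the1_equality[OF ex1_toward]) auto

lemma tparent_toward: "v \<noteq> x \<Longrightarrow> tadj v (tparent x v) \<and> x \<in> tcomp v (tparent x v)"
  unfolding tparent_def by (rule theI'[OF ex1_toward])

lemma tparent_tree_aut: "tree_aut \<sigma> \<Longrightarrow> v \<noteq> x \<Longrightarrow> tparent (\<sigma> x) (\<sigma> v) = \<sigma> (tparent x v)"
  by (rule tparent_eqI) (auto simp: tree_aut_eq_iff tree_aut_tadj_iff tree_aut_mem_tcomp_iff tparent_toward)

lemma tparent_troot: "v \<noteq> troot \<Longrightarrow> tparent troot v = tpar v"
  by (rule tparent_eqI) (auto simp: troot_in_tcomp_tpar)

lemma tparent_tadj: "tadj u v \<Longrightarrow> tparent u v = u"
  by (rule tparent_eqI) (auto simp: tadj_sym tcomp_self)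

lemma tparent_tgen_troot: "c \<in> {0,1,2} \<Longrightarrow> tparent (tgen c) troot = tgen c"
  by (simp add: tparent_tadj tadj_sym tadj_troot_tgen)

lemma tparent_tgen:
  assumes c: "c \<in> {0,1,2}" and v: "v \<noteq> troot" "v \<noteq> tgen c"
  shows "tparent (tgen c) v = tpar v"
proof (rule tparent_eqI)
  have "troot \<in> tcomp v (tpar v)" using troot_in_tcomp_tpar[OF v(1)] by blast
  then show "tgen c \<in> tcomp v (tpar v)"
    by (rule tcomp_extend) (use v c tadj_troot_tgen in auto)
qed (use v tadj_tpar in auto)

lemma tadj_imp_tinv_tgen:
  assumes "tadj u v"
  shows "\<exists>c\<in>{0,1,2}. inv (tmult u) v = tgen c"
proof -
  have s: "tree_aut (inv (tmult u))" by (rule tree_aut_inv[OF tree_aut_tmult])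
  have "tadj (inv (tmult u) u) (inv (tmult u) v)" using assms tree_aut_tadj_iff[OF s] by simp
  moreover have "inv (tmult u) u = troot"
    using tree_aut_inv_apply[OF tree_aut_tmult, of u troot] by (simp add: tmult_troot)
  ultimately show ?thesis using tadj_troot_imp_tgen by simp
qed

lemma tcomp_eq_tmult_image:
  assumes "tadj u v"
  shows "tcomp u v = tmult u ` tcomp troot (inv (tmult u) v)"
  using tcomp_tree_aut[OF tree_aut_tmult, of u troot "inv (tmult u) v"]
  by (simp add: tmult_troot tree_aut_apply_inv[OF tree_aut_tmult])

lemma disjoint_tcomp:
  assumes "tadj u v1" "tadj u v2" "v1 \<noteq> v2"
  shows "tcomp u v1 \<inter> tcomp u v2 = {}"
proof -
  obtain c where c: "c \<in> {0,1,2}" "inv (tmult u) v1 = tgen c"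
    using tadj_imp_tinv_tgen[OF assms(1)] by blast
  obtain d where d: "d \<in> {0,1,2}" "inv (tmult u) v2 = tgen d"
    using tadj_imp_tinv_tgen[OF assms(2)] by blast
  have "c \<noteq> d"
  proof
    assume "c = d"
    then have "tmult u (inv (tmult u) v1) = tmult u (inv (tmult u) v2)" using c d by simp
    then show False using assms(3) tree_aut_apply_inv[OF tree_aut_tmult] by simp
  qed
  have "tcomp troot (tgen c) \<inter> tcomp troot (tgen d) = {}"
  proof (intro equalityI subsetI)
    fix y assume "y \<in> tcomp troot (tgen c) \<inter> tcomp troot (tgen d)"
    then have "prefix [c] (Rep_tvert y)" "prefix [d] (Rep_tvert y)"
      using tcomp_troot_tgen_prefix c(1) d(1) by auto
    then show "y \<in> {}" using \<open>c \<noteq> d\<close> by (auto simp: prefix_def)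
  qed simp
  then show ?thesis unfolding tcomp_eq_tmult_image[OF assms(1)] tcomp_eq_tmult_image[OF assms(2)] c d
    using bij_is_inj[OF tree_aut_bij[OF tree_aut_tmult, of u]] by (simp add: image_Int[symmetric])
qed

definition tprefixes :: "tvert \<Rightarrow> tvert set" where
  "tprefixes y = {s. s \<noteq> troot \<and> prefix (Rep_tvert s) (Rep_tvert y)}"

lemma finite_tprefixes: "finite (tprefixes y)"
proof (rule finite_imageD)
  show "finite (Rep_tvert ` tprefixes y)"
    by (rule finite_subset[of _ "set (prefixes (Rep_tvert y))"]) (auto simp: tprefixes_def)
qed (simp add: inj_on_def Rep_tvert_inject)

lemma tpar_tprefixes:
  assumes "s \<in> tprefixes y"
  shows "tpar s \<in> insert troot (tprefixes y)"
proof -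
  have "prefix (Rep_tvert (tpar s)) (Rep_tvert s)" by (simp add: Rep_tpar prefixeq_butlast)
  then have "prefix (Rep_tvert (tpar s)) (Rep_tvert y)"
    using assms prefix_order.trans unfolding tprefixes_def by blast
  then show ?thesis by (simp add: tprefixes_def)
qed

lemma tprefixes_subset_tcomp:
  assumes c: "c \<in> {0,1,2}" and y: "y \<in> tcomp troot (tgen c)"
  shows "tprefixes y \<subseteq> tcomp troot (tgen c)"
proof
  fix s assume "s \<in> tprefixes y"
  then show "s \<in> tcomp troot (tgen c)"
  proof (induction "length (Rep_tvert s)" arbitrary: s)
    case 0 then show ?case by (simp add: tprefixes_def neq_troot_iff)
  next
    case (Suc n)
    show ?case
    proof (cases n)
      case 0
      have "prefix [c] (Rep_tvert y)" by (rule tcomp_troot_tgen_prefix[OF c y])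
      moreover obtain d where "Rep_tvert s = [d]"
        using Suc.hyps(2) 0 by (cases "Rep_tvert s") auto
      ultimately have "Rep_tvert s = [c]"
        using Suc.prems by (auto simp: tprefixes_def prefix_def)
      then have "s = tgen c" by (metis Rep_tgen[OF c] Rep_tvert_inject)
      then show ?thesis by (simp add: tcomp_self)
    next
      case (Suc m)
      have s: "s \<noteq> troot" using Suc.prems by (simp add: tprefixes_def)
      have len: "length (Rep_tvert (tpar s)) = n" using Suc.hyps(2) by (simp add: Rep_tpar)
      then have "tpar s \<noteq> troot" using Suc by auto
      then have "tpar s \<in> tprefixes y" using tpar_tprefixes[OF Suc.prems] by simp
      then have "tpar s \<in> tcomp troot (tgen c)" using Suc.hyps(1) len by blast
      then show ?thesis
        by (rule tcomp_extend) (use s tadj_tpar[OF s] tadj_sym \<open>tpar s \<noteq> troot\<close> in auto)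
    qed
  qed
qed

lemma tcomp_subtree_cover:
  assumes a: "tadj u v" and y: "y \<in> tcomp u v"
  shows "\<exists>S. finite S \<and> S \<subseteq> tcomp u v \<and> y \<in> S \<and> (\<forall>s\<in>S. tparent u s \<in> insert u S)"
proof -
  let ?\<sigma> = "tmult u"
  have \<sigma>: "tree_aut ?\<sigma>" by (rule tree_aut_tmult)
  obtain c where c: "c \<in> {0,1,2}" "inv ?\<sigma> v = tgen c" using tadj_imp_tinv_tgen[OF a] by blast
  have T: "tcomp u v = ?\<sigma> ` tcomp troot (tgen c)" using tcomp_eq_tmult_image[OF a] c by simp
  obtain y0 where y0: "y0 \<in> tcomp troot (tgen c)" "y = ?\<sigma> y0" using y T by auto
  have sub: "tprefixes y0 \<subseteq> tcomp troot (tgen c)" by (rule tprefixes_subset_tcomp[OF c(1) y0(1)])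
  have "y0 \<noteq> troot" using y0(1) notin_tcomp_self tadj_troot_tgen[OF c(1)] by blast
  then have "y0 \<in> tprefixes y0" by (simp add: tprefixes_def)
  moreover have "tparent u (?\<sigma> s) \<in> insert u (?\<sigma> ` tprefixes y0)" if s: "s \<in> tprefixes y0" for s
  proof -
    have "s \<noteq> troot" using s by (simp add: tprefixes_def)
    then have "tparent u (?\<sigma> s) = ?\<sigma> (tpar s)"
      using tparent_tree_aut[OF \<sigma>, of s troot] by (simp add: tmult_troot tparent_troot)
    then show ?thesis using tpar_tprefixes[OF s] by (auto simp: tmult_troot)
  qed
  ultimately show ?thesis using sub T y0(2) finite_tprefixes
    by (intro exI[of _ "?\<sigma> ` tprefixes y0"]) auto
qed

lemma finite_hnodes [simp]: "finite hnodes"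
  by (simp add: hnodes_def)

lemma one_in_hnodes: "(1::nat) \<in> hnodes"
  by (simp add: hnodes_def)

lemma hadj_sym: "hadj i j \<longleftrightarrow> hadj j i"
  unfolding hadj_def by (auto simp: insert_commute)

lemma hadj_in_hnodes: "hadj i j \<Longrightarrow> i \<in> hnodes \<and> j \<in> hnodes"
  unfolding hadj_def by auto

definition positive_weights :: "(nat \<Rightarrow> real) \<Rightarrow> bool" where
  "positive_weights w \<longleftrightarrow> (\<forall>i\<in>hnodes. w i > 0)"

lemma hz_pos: "positive_weights w \<Longrightarrow> i \<in> hnodes \<Longrightarrow> hz w i > 0"
proof -
  assume w: "positive_weights w" and i: "i \<in> hnodes"
  have sub: "hN i \<subseteq> hnodes" by (auto simp: hN_def)
  have "i \<in> hN i" using i by (simp add: hN_def hadj_def)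
  then show ?thesis unfolding hz_def using w sub finite_subset[OF sub]
    by (intro sum_pos) (auto simp: positive_weights_def)
qed

definition walk_norm :: "(nat \<Rightarrow> real) \<Rightarrow> real" where
  "walk_norm w = (\<Sum>k\<in>hnodes. w k * hz w k)"

lemma walk_norm_pos: "positive_weights w \<Longrightarrow> walk_norm w > 0"
  unfolding walk_norm_def using hz_pos by (intro sum_pos) (auto simp: positive_weights_def hnodes_def)

lemma root_prob_eq: "root_prob w i = (if i \<in> hnodes then w i * hz w i / walk_norm w else 0)"
  by (simp add: root_prob_def walk_norm_def)

lemma root_prob_nonneg: "positive_weights w \<Longrightarrow> root_prob w i \<ge> 0"
  using hz_pos walk_norm_pos by (auto simp: root_prob_eq positive_weights_def less_imp_le)

lemma step_prob_nonneg: "positive_weights w \<Longrightarrow> step_prob w i j \<ge> 0"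
  using hz_pos hadj_in_hnodes by (auto simp: step_prob_def positive_weights_def less_imp_le)

lemma sum_root_prob: "positive_weights w \<Longrightarrow> (\<Sum>k\<in>hnodes. root_prob w k) = 1"
  using walk_norm_pos[of w]
  by (simp add: root_prob_eq sum_divide_distrib[symmetric] walk_norm_def[symmetric])

lemma sum_step_prob: "positive_weights w \<Longrightarrow> i \<in> hnodes \<Longrightarrow> (\<Sum>j\<in>hnodes. step_prob w i j) = 1"
proof -
  assume w: "positive_weights w" and i: "i \<in> hnodes"
  have "(\<Sum>j\<in>hnodes. step_prob w i j) = (\<Sum>j\<in>hN i. w j) / hz w i"
    unfolding step_prob_def hN_def by (simp add: sum.inter_filter[symmetric] sum_divide_distrib)
  then show ?thesis using hz_pos[OF w i] by (simp add: hz_def)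
qed

lemma root_prob_step_prob_sym:
  "positive_weights w \<Longrightarrow> root_prob w i * step_prob w i j = root_prob w j * step_prob w j i"
  using hz_pos[of w i] hz_pos[of w j] hadj_in_hnodes[of i j]
  by (auto simp: root_prob_eq step_prob_def hadj_sym)

definition cyl :: "tvert set \<Rightarrow> (tvert \<Rightarrow> nat) \<Rightarrow> (tvert \<Rightarrow> nat) set" where
  "cyl S \<eta> = {\<phi> \<in> space cfg_space. \<forall>v\<in>S. \<phi> v = \<eta> v}"

lemma space_cfg_space: "space cfg_space = {\<phi>. \<forall>v. \<phi> v \<in> hnodes}"
  unfolding cfg_space_def by (auto simp: space_PiM PiE_def Pi_def extensional_def)

lemma space_cfg_space_PiE: "space cfg_space = PiE UNIV (\<lambda>_. hnodes)"
  unfolding cfg_space_def by (simp add: space_PiM)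

lemma measurable_spin: "(\<lambda>\<phi>. \<phi> v) \<in> measurable cfg_space (count_space hnodes)"
  unfolding cfg_space_def by (rule measurable_component_singleton) simp

lemma measurable_precompose: "(\<lambda>\<phi>. \<phi> \<circ> \<sigma>) \<in> measurable cfg_space cfg_space"
proof -
  have "(\<lambda>\<phi> i. \<phi> (\<sigma> i)) \<in> measurable cfg_space (Pi\<^sub>M UNIV (\<lambda>_. count_space hnodes))"
    by (rule measurable_PiM_single') (auto simp: measurable_spin space_cfg_space)
  then show ?thesis by (simp add: cfg_space_def comp_def)
qed

lemma measurable_cfg_space_cong:
  "sets \<mu> = sets cfg_space \<Longrightarrow> f \<in> measurable cfg_space N \<Longrightarrow> f \<in> measurable \<mu> N"
  using measurable_cong_sets by blast

lemma cyl_in_sets: "finite S \<Longrightarrow> cyl S \<eta> \<in> sets cfg_space"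
proof -
  have spin: "{\<phi> \<in> space cfg_space. \<phi> v = \<eta> v} \<in> sets cfg_space" for v
  proof -
    have "{\<phi> \<in> space cfg_space. \<phi> v = \<eta> v} = (\<lambda>\<phi>. \<phi> v) -` ({\<eta> v} \<inter> hnodes) \<inter> space cfg_space"
      by (auto simp: space_cfg_space)
    moreover have "(\<lambda>\<phi>. \<phi> v) -` ({\<eta> v} \<inter> hnodes) \<inter> space cfg_space \<in> sets cfg_space"
      by (rule measurable_sets[OF measurable_spin]) simp
    ultimately show ?thesis by simp
  qed
  assume "finite S"
  show ?thesis
  proof (cases "S = {}")
    case False
    then have "cyl S \<eta> = (\<Inter>v\<in>S. {\<phi> \<in> space cfg_space. \<phi> v = \<eta> v})" by (auto simp: cyl_def)
    then show ?thesis using \<open>finite S\<close> False spin by (auto intro!: sets.finite_INT)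
  qed (simp add: cyl_def)
qed

lemma cyl_eq_empty: "v \<in> S \<Longrightarrow> \<eta> v \<notin> hnodes \<Longrightarrow> cyl S \<eta> = {}"
proof -
  assume a: "v \<in> S" "\<eta> v \<notin> hnodes"
  have "\<phi> \<notin> cyl S \<eta>" for \<phi>
  proof
    assume "\<phi> \<in> cyl S \<eta>"
    then have "\<phi> v = \<eta> v" "\<phi> v \<in> hnodes" using a(1) unfolding cyl_def space_cfg_space by blast+
    then show False using a(2) by simp
  qed
  then show ?thesis by blast
qed

lemma cyl_Int: "cyl S1 \<eta>1 \<inter> cyl S2 \<eta>2 =
   (if \<forall>v\<in>S1 \<inter> S2. \<eta>1 v = \<eta>2 v then cyl (S1 \<union> S2) (\<lambda>v. if v \<in> S1 then \<eta>1 v else \<eta>2 v) else {})"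
  by (auto simp: cyl_def)

lemma disjoint_family_cyl: "disjoint_family_on (cyl D) (PiE D (\<lambda>_. hnodes))"
  unfolding disjoint_family_on_def
proof (intro ballI impI)
  fix \<xi>1 \<xi>2 assume "\<xi>1 \<in> PiE D (\<lambda>_. hnodes)" "\<xi>2 \<in> PiE D (\<lambda>_. hnodes)" "\<xi>1 \<noteq> \<xi>2"
  then obtain v where "v \<in> D" "\<xi>1 v \<noteq> \<xi>2 v" by (metis PiE_ext)
  then show "cyl D \<xi>1 \<inter> cyl D \<xi>2 = {}" by (auto simp: cyl_def)
qed

lemma restrict_preimage_eq_cyl_Union:
  assumes "X \<subseteq> PiE D (\<lambda>_. hnodes)"
  shows "{\<phi> \<in> space cfg_space. restrict \<phi> D \<in> X} = (\<Union>\<eta>\<in>X. cyl D \<eta>)"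
proof (intro set_eqI iffI)
  fix \<phi> assume "\<phi> \<in> {\<phi> \<in> space cfg_space. restrict \<phi> D \<in> X}"
  then show "\<phi> \<in> (\<Union>\<eta>\<in>X. cyl D \<eta>)" by (auto simp: cyl_def intro!: bexI[of _ "restrict \<phi> D"])
next
  fix \<phi> assume "\<phi> \<in> (\<Union>\<eta>\<in>X. cyl D \<eta>)"
  then obtain \<eta> where e: "\<eta> \<in> X" "\<phi> \<in> cyl D \<eta>" by blast
  then have "restrict \<phi> D = \<eta>" using assms by (auto simp: cyl_def PiE_def extensional_def fun_eq_iff)
  then show "\<phi> \<in> {\<phi> \<in> space cfg_space. restrict \<phi> D \<in> X}" using e by (auto simp: cyl_def)
qed

lemma space_cfg_space_eq_cyl_Union: "space cfg_space = (\<Union>\<eta>\<in>PiE D (\<lambda>_. hnodes). cyl D \<eta>)"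
  by (subst restrict_preimage_eq_cyl_Union[symmetric]) (auto simp: space_cfg_space)

text \<open>An event depending only on the spins in a finite set \<open>D\<close> is a finite union of cylinders on \<open>D\<close>.\<close>
lemma restrict_event_in_sigma_sets:
  assumes "finite D" and cyl: "\<And>\<eta>. cyl D \<eta> \<in> sigma_sets (space cfg_space) G"
  shows "{\<phi> \<in> space cfg_space. restrict \<phi> D \<in> X} \<in> sigma_sets (space cfg_space) G"
proof -
  have "{\<phi> \<in> space cfg_space. restrict \<phi> D \<in> X} =
      {\<phi> \<in> space cfg_space. restrict \<phi> D \<in> X \<inter> PiE D (\<lambda>_. hnodes)}"
    by (auto simp: space_cfg_space)
  also have "\<dots> = \<Union> (cyl D ` (X \<inter> PiE D (\<lambda>_. hnodes)))"
    by (subst restrict_preimage_eq_cyl_Union) auto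
  also have "\<dots> \<in> sigma_sets (space cfg_space) G"
    using \<open>finite D\<close> by (intro sigma_sets_UNION countable_finite finite_imageI finite_Int disjI2 finite_PiE)
      (auto intro: cyl)
  finally show ?thesis .
qed

lemma measure_cyl_insert:
  assumes "finite_measure \<mu>" "sets \<mu> = sets cfg_space" "finite S" "y \<notin> S"
  shows "measure \<mu> (cyl S \<eta>) = (\<Sum>j\<in>hnodes. measure \<mu> (cyl (insert y S) (\<eta>(y := j))))"
proof -
  have "cyl S \<eta> = (\<Union>j\<in>hnodes. cyl (insert y S) (\<eta>(y := j)))"
    using assms(4) by (auto simp: cyl_def space_cfg_space)
  moreover have "disjoint_family_on (\<lambda>j. cyl (insert y S) (\<eta>(y := j))) hnodes"
    by (auto simp: disjoint_family_on_def cyl_def)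
  ultimately show ?thesis
    using assms by (simp add: finite_measure.finite_measure_finite_Union cyl_in_sets image_subset_iff)
qed

definition tball :: "nat \<Rightarrow> tvert set" where
  "tball R = {v. length (Rep_tvert v) \<le> R}"

lemma finite_tball: "finite (tball R)"
proof -
  have "Rep_tvert ` tball R \<subseteq> {xs. set xs \<subseteq> {0,1,2} \<and> length xs \<le> R}"
    using set_Rep_tvert by (auto simp: tball_def)
  then have "finite (Rep_tvert ` tball R)"
    by (rule finite_subset) (rule finite_lists_length_le, simp)
  then show ?thesis by (rule finite_imageD) (simp add: inj_on_def Rep_tvert_inject)
qed

lemma troot_in_tball: "troot \<in> tball R"
  by (simp add: tball_def)

lemma tball_mono: "a \<le> b \<Longrightarrow> tball a \<subseteq> tball b"
  by (auto simp: tball_def)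

definition tball_cylinders :: "nat \<Rightarrow> (tvert \<Rightarrow> nat) set set" where
  "tball_cylinders R = {cyl (tball R') \<eta> | R' \<eta>. R \<le> R'}"

lemma tball_cylinders_Pow: "tball_cylinders R \<subseteq> Pow (space cfg_space)"
  by (auto simp: tball_cylinders_def cyl_def)

lemma Int_stable_tball_cylinders: "Int_stable (tball_cylinders R)"
proof (rule Int_stableI)
  fix A B assume "A \<in> tball_cylinders R" "B \<in> tball_cylinders R"
  then obtain a b \<eta>1 \<eta>2 where ab: "A = cyl (tball a) \<eta>1" "B = cyl (tball b) \<eta>2" "R \<le> a" "R \<le> b"
    by (auto simp: tball_cylinders_def)
  have u: "tball a \<union> tball b = tball (max a b)" by (auto simp: tball_def)
  show "A \<inter> B \<in> tball_cylinders R"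
  proof (cases "\<forall>v\<in>tball a \<inter> tball b. \<eta>1 v = \<eta>2 v")
    case True
    then show ?thesis unfolding ab cyl_Int tball_cylinders_def u using ab(3) by auto
  next
    case False
    have "cyl (tball R) (\<lambda>_. 0) = {}" by (rule cyl_eq_empty[OF troot_in_tball]) (simp add: hnodes_def)
    then show ?thesis unfolding ab cyl_Int tball_cylinders_def using False
      by (auto intro!: exI[of _ R] exI[of _ "\<lambda>_. 0::nat"])
  qed
qed

lemma sets_cfg_space_tball_cylinders:
  "sets cfg_space = sigma_sets (space cfg_space) (tball_cylinders R)"
proof
  show "sigma_sets (space cfg_space) (tball_cylinders R) \<subseteq> sets cfg_space"
    by (rule sets.sigma_sets_subset) (auto simp: tball_cylinders_def cyl_in_sets finite_tball)
  have "sets cfg_space = sigma_sets (space cfg_space)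
     {{f\<in>PiE UNIV (\<lambda>_. hnodes). f i \<in> A} | i A. i \<in> UNIV \<and> A \<in> sets (count_space hnodes)}"
    unfolding cfg_space_def sets_PiM_single by (simp add: space_PiM)
  also have "\<dots> \<subseteq> sigma_sets (space cfg_space) (tball_cylinders R)"
  proof (rule sigma_sets_mono, safe)
    fix i A
    let ?R = "max R (length (Rep_tvert i))"
    have "{f\<in>PiE UNIV (\<lambda>_. hnodes). f i \<in> A} =
        {\<phi> \<in> space cfg_space. restrict \<phi> (tball ?R) \<in> {\<eta>. \<eta> i \<in> A}}"
      by (auto simp: space_cfg_space_PiE tball_def)
    also have "\<dots> \<in> sigma_sets (space cfg_space) (tball_cylinders R)"
      by (rule restrict_event_in_sigma_sets) (auto simp: finite_tball tball_cylinders_def intro!: sigma_sets.Basic)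
    finally show "{f\<in>PiE UNIV (\<lambda>_. hnodes). f i \<in> A} \<in> sigma_sets (space cfg_space) (tball_cylinders R)" .
  qed
  finally show "sets cfg_space \<subseteq> sigma_sets (space cfg_space) (tball_cylinders R)" .
qed

lemma cfg_measure_eqI:
  assumes "finite_measure \<mu>" "sets \<mu> = sets cfg_space" "sets \<nu> = sets cfg_space"
    and "\<And>X. X \<in> tball_cylinders R \<Longrightarrow> emeasure \<mu> X = emeasure \<nu> X"
  shows "\<mu> = \<nu>"
proof (rule measure_eqI_generator_eq_countable[OF Int_stable_tball_cylinders tball_cylinders_Pow assms(4)])
  show "sets \<mu> = sigma_sets (space cfg_space) (tball_cylinders R)"
    "sets \<nu> = sigma_sets (space cfg_space) (tball_cylinders R)"
    using assms(2,3) sets_cfg_space_tball_cylinders by auto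
  let ?A = "cyl (tball R) ` PiE (tball R) (\<lambda>_. hnodes)"
  show "?A \<subseteq> tball_cylinders R" by (auto simp: tball_cylinders_def)
  show "\<Union>?A = space cfg_space" using space_cfg_space_eq_cyl_Union by simp
  show "countable ?A" by (intro countable_finite finite_imageI finite_PiE finite_tball) simp
  show "emeasure \<mu> a \<noteq> \<infinity>" for a using assms(1) by (simp add: finite_measure.emeasure_finite)
qed

section \<open>The law of the walk\<close>

definition rooted_subtree :: "tvert \<Rightarrow> tvert set \<Rightarrow> bool" where
  "rooted_subtree x S \<longleftrightarrow> finite S \<and> x \<in> S \<and> (\<forall>v\<in>S - {x}. tparent x v \<in> S)"

definition walk_weight :: "(nat \<Rightarrow> real) \<Rightarrow> tvert \<Rightarrow> tvert set \<Rightarrow> (tvert \<Rightarrow> nat) \<Rightarrow> real" where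
  "walk_weight w x S \<eta> = root_prob w (\<eta> x) * (\<Prod>v\<in>S - {x}. step_prob w (\<eta> (tparent x v)) (\<eta> v))"

lemma walk_law_iff: "walk_law w x \<mu> \<longleftrightarrow> prob_space \<mu> \<and> sets \<mu> = sets cfg_space \<and>
   (\<forall>S \<eta>. rooted_subtree x S \<longrightarrow> measure \<mu> (cyl S \<eta>) = walk_weight w x S \<eta>)"
proof -
  have "sets \<mu> = sets cfg_space \<Longrightarrow> space \<mu> = space cfg_space" by (rule sets_eq_imp_space_eq)
  then show ?thesis unfolding walk_law_def rooted_subtree_def walk_weight_def cyl_def by auto
qed

lemma walk_law_sets: "walk_law w x \<mu> \<Longrightarrow> sets \<mu> = sets cfg_space"
  by (simp add: walk_law_def)

lemma rooted_subtree_singleton: "rooted_subtree x {x}"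
  by (simp add: rooted_subtree_def)

lemma rooted_subtree_tball: "rooted_subtree troot (tball R)"
  unfolding rooted_subtree_def using finite_tball troot_in_tball
  by (auto simp: tparent_troot tball_def Rep_tpar)

lemma walk_law_cyl_singleton: "walk_law w x \<mu> \<Longrightarrow> measure \<mu> (cyl {x} (\<lambda>_. i)) = root_prob w i"
  using rooted_subtree_singleton by (simp add: walk_law_iff walk_weight_def)

lemma walk_weight_eq_0:
  assumes "finite S" "v \<in> S" "\<eta> v \<notin> hnodes"
  shows "walk_weight w x S \<eta> = 0"
proof (cases "v = x")
  case True then show ?thesis using assms by (simp add: walk_weight_def root_prob_def)
next
  case False
  have "step_prob w (\<eta> (tparent x v)) (\<eta> v) = 0" using assms hadj_in_hnodes by (auto simp: step_prob_def)
  then have "(\<Prod>u\<in>S - {x}. step_prob w (\<eta> (tparent x u)) (\<eta> u)) = 0"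
    using assms False by (intro prod_zero) auto
  then show ?thesis by (simp add: walk_weight_def)
qed

lemma sum_walk_weight_insert:
  assumes w: "positive_weights w" and R: "rooted_subtree x S"
    and y: "y \<notin> S" "tparent x y \<in> S"
  shows "(\<Sum>j\<in>hnodes. walk_weight w x (insert y S) (\<eta>(y := j))) = walk_weight w x S \<eta>"
proof -
  have fS: "finite S" and x: "x \<in> S" and cl: "\<And>v. v \<in> S - {x} \<Longrightarrow> tparent x v \<in> S"
    using R by (auto simp: rooted_subtree_def)
  have yx: "y \<noteq> x" using x y by auto
  let ?p = "\<eta> (tparent x y)"
  have "walk_weight w x (insert y S) (\<eta>(y := j)) = walk_weight w x S \<eta> * step_prob w ?p j" for j
  proof -
    have "insert y S - {x} = insert y (S - {x})" using yx by auto
    moreover have "(\<Prod>v\<in>S - {x}. step_prob w ((\<eta>(y := j)) (tparent x v)) ((\<eta>(y := j)) v)) =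
        (\<Prod>v\<in>S - {x}. step_prob w (\<eta> (tparent x v)) (\<eta> v))"
    proof (rule prod.cong[OF refl])
      fix v assume "v \<in> S - {x}"
      then have "v \<noteq> y" "tparent x v \<noteq> y" using cl y by auto
      then show "step_prob w ((\<eta>(y := j)) (tparent x v)) ((\<eta>(y := j)) v) =
          step_prob w (\<eta> (tparent x v)) (\<eta> v)" by simp
    qed
    moreover have "tparent x y \<noteq> y" using y by auto
    ultimately show ?thesis
      using fS y yx by (simp add: walk_weight_def prod.insert mult_ac)
  qed
  then have "(\<Sum>j\<in>hnodes. walk_weight w x (insert y S) (\<eta>(y := j))) =
      walk_weight w x S \<eta> * (\<Sum>j\<in>hnodes. step_prob w ?p j)"
    by (simp add: sum_distrib_left)
  also have "\<dots> = walk_weight w x S \<eta>"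
    using sum_step_prob[OF w] walk_weight_eq_0[OF fS y(2)] by (cases "?p \<in> hnodes") auto
  finally show ?thesis .
qed

lemma walk_weight_tgen_troot:
  assumes c: "c \<in> {0,1,2}" and w: "positive_weights w"
    and R: "rooted_subtree (tgen c) S" and r: "troot \<in> S"
  shows "rooted_subtree troot S \<and> walk_weight w troot S \<eta> = walk_weight w (tgen c) S \<eta>"
proof
  let ?l = "tgen c"
  have l: "?l \<in> S" "?l \<noteq> troot" "finite S" using R tgen_neq_troot[OF c] by (auto simp: rooted_subtree_def)
  have cl: "\<And>v. v \<in> S - {?l} \<Longrightarrow> tparent ?l v \<in> S" using R by (auto simp: rooted_subtree_def)
  show "rooted_subtree troot S" unfolding rooted_subtree_def
  proof (intro conjI ballI)
    fix v assume v: "v \<in> S - {troot}"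
    show "tparent troot v \<in> S"
    proof (cases "v = ?l")
      case True then show ?thesis using r c by (simp add: tparent_troot tgen_neq_troot tpar_tgen)
    next
      case False then show ?thesis using cl[of v] v c by (simp add: tparent_troot tparent_tgen)
    qed
  qed (use l r in auto)
  let ?P = "\<Prod>v\<in>S - {troot, ?l}. step_prob w (\<eta> (tparent ?l v)) (\<eta> v)"
  have e1: "S - {troot} = insert ?l (S - {troot, ?l})" using l by auto
  have e2: "S - {?l} = insert troot (S - {troot, ?l})" using l r by auto
  have pr: "(\<Prod>v\<in>S - {troot, ?l}. step_prob w (\<eta> (tparent troot v)) (\<eta> v)) = ?P"
    using c by (intro prod.cong) (auto simp: tparent_troot tparent_tgen)
  have "walk_weight w troot S \<eta> = root_prob w (\<eta> troot) * step_prob w (\<eta> troot) (\<eta> ?l) * ?P"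
    unfolding walk_weight_def e1 pr[symmetric] using l tparent_troot[OF l(2)] tpar_tgen[OF c]
    by (simp add: prod.insert)
  also have "\<dots> = root_prob w (\<eta> ?l) * step_prob w (\<eta> ?l) (\<eta> troot) * ?P"
    using root_prob_step_prob_sym[OF w] by simp
  also have "\<dots> = walk_weight w ?l S \<eta>"
    unfolding walk_weight_def e2 using l tparent_tgen_troot[OF c] by (simp add: prod.insert)
  finally show "walk_weight w troot S \<eta> = walk_weight w ?l S \<eta>" .
qed

lemma walk_law_troot_tgen:
  assumes W: "walk_law w troot \<mu>" and c: "c \<in> {0,1,2}" and w: "positive_weights w"
  shows "walk_law w (tgen c) \<mu>"
proof -
  let ?l = "tgen c"
  have P: "prob_space \<mu>" "sets \<mu> = sets cfg_space"
    and F: "\<And>S \<eta>. rooted_subtree troot S \<Longrightarrow> measure \<mu> (cyl S \<eta>) = walk_weight w troot S \<eta>"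
    using W by (auto simp: walk_law_iff)
  have with_troot: "measure \<mu> (cyl S \<eta>) = walk_weight w ?l S \<eta>"
    if "rooted_subtree ?l S" "troot \<in> S" for S \<eta>
    using walk_weight_tgen_troot[OF c w that] F by simp
  have "measure \<mu> (cyl S \<eta>) = walk_weight w ?l S \<eta>" if R: "rooted_subtree ?l S" for S \<eta>
  proof (cases "troot \<in> S")
    case False
    have fS: "finite S" using R by (simp add: rooted_subtree_def)
    have par: "tparent ?l troot \<in> S" using R c by (simp add: tparent_tgen_troot rooted_subtree_def)
    have RS: "rooted_subtree ?l (insert troot S)"
      using R par unfolding rooted_subtree_def by auto
    have "measure \<mu> (cyl S \<eta>) = (\<Sum>j\<in>hnodes. measure \<mu> (cyl (insert troot S) (\<eta>(troot := j))))"
      using P fS False by (intro measure_cyl_insert) (auto intro: prob_space.finite_measure)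
    also have "\<dots> = (\<Sum>j\<in>hnodes. walk_weight w ?l (insert troot S) (\<eta>(troot := j)))"
      using with_troot[OF RS] by simp
    also have "\<dots> = walk_weight w ?l S \<eta>"
      by (rule sum_walk_weight_insert[OF w R False par])
    finally show ?thesis .
  qed (use with_troot R in simp)
  then show ?thesis using P by (simp add: walk_law_iff)
qed

lemma walk_law_tree_aut:
  assumes s: "tree_aut \<sigma>" and W: "walk_law w (\<sigma> x) \<mu>"
  shows "walk_law w x (distr \<mu> cfg_space (\<lambda>\<phi>. \<phi> \<circ> \<sigma>))"
proof -
  have P: "prob_space \<mu>" and Se: "sets \<mu> = sets cfg_space"
    and F: "\<And>S \<eta>. rooted_subtree (\<sigma> x) S \<Longrightarrow> measure \<mu> (cyl S \<eta>) = walk_weight w (\<sigma> x) S \<eta>"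
    using W by (auto simp: walk_law_iff)
  have sp: "space \<mu> = space cfg_space" using Se by (rule sets_eq_imp_space_eq)
  have m: "(\<lambda>\<phi>. \<phi> \<circ> \<sigma>) \<in> measurable \<mu> cfg_space"
    using Se measurable_precompose by (rule measurable_cfg_space_cong)
  have "prob_space (distr \<mu> cfg_space (\<lambda>\<phi>. \<phi> \<circ> \<sigma>))"
    using P m by (simp add: prob_space.prob_space_distr)
  moreover have "measure (distr \<mu> cfg_space (\<lambda>\<phi>. \<phi> \<circ> \<sigma>)) (cyl S \<eta>) = walk_weight w x S \<eta>"
    if R: "rooted_subtree x S" for S \<eta>
  proof -
    have fS: "finite S" using R by (simp add: rooted_subtree_def)
    have "measure (distr \<mu> cfg_space (\<lambda>\<phi>. \<phi> \<circ> \<sigma>)) (cyl S \<eta>) =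
        measure \<mu> ((\<lambda>\<phi>. \<phi> \<circ> \<sigma>) -` cyl S \<eta> \<inter> space \<mu>)"
      by (rule measure_distr[OF m cyl_in_sets[OF fS]])
    also have "(\<lambda>\<phi>. \<phi> \<circ> \<sigma>) -` cyl S \<eta> \<inter> space \<mu> = cyl (\<sigma> ` S) (\<eta> \<circ> inv \<sigma>)"
      unfolding sp by (auto simp: cyl_def space_cfg_space tree_aut_inv_apply[OF s])
    also have "measure \<mu> (cyl (\<sigma> ` S) (\<eta> \<circ> inv \<sigma>)) = walk_weight w (\<sigma> x) (\<sigma> ` S) (\<eta> \<circ> inv \<sigma>)"
    proof (rule F)
      show "rooted_subtree (\<sigma> x) (\<sigma> ` S)" using R unfolding rooted_subtree_def
        by (auto simp: tparent_tree_aut[OF s] tree_aut_eq_iff[OF s])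
    qed
    also have "\<dots> = walk_weight w x S \<eta>"
    proof -
      have e: "\<sigma> ` S - {\<sigma> x} = \<sigma> ` (S - {x})" by (auto simp: tree_aut_eq_iff[OF s])
      have i: "inj_on \<sigma> (S - {x})" using bij_is_inj[OF tree_aut_bij[OF s]] by (auto simp: inj_on_def)
      show ?thesis unfolding walk_weight_def e prod.reindex[OF i]
        by (auto simp: tree_aut_inv_apply[OF s] tparent_tree_aut[OF s] intro!: prod.cong)
    qed
    finally show ?thesis .
  qed
  ultimately show ?thesis by (simp add: walk_law_iff)
qed

lemma distr_precompose_inv:
  assumes s: "tree_aut \<sigma>" and S: "sets \<mu> = sets cfg_space"
  shows "distr (distr \<mu> cfg_space (\<lambda>\<phi>. \<phi> \<circ> \<sigma>)) cfg_space (\<lambda>\<phi>. \<phi> \<circ> inv \<sigma>) = \<mu>"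
proof -
  have m: "(\<lambda>\<phi>. \<phi> \<circ> \<sigma>) \<in> measurable \<mu> cfg_space"
    using S measurable_precompose by (rule measurable_cfg_space_cong)
  have "distr (distr \<mu> cfg_space (\<lambda>\<phi>. \<phi> \<circ> \<sigma>)) cfg_space (\<lambda>\<phi>. \<phi> \<circ> inv \<sigma>) =
        distr \<mu> cfg_space ((\<lambda>\<phi>. \<phi> \<circ> inv \<sigma>) \<circ> (\<lambda>\<phi>. \<phi> \<circ> \<sigma>))"
    by (rule distr_distr[OF measurable_precompose m])
  also have "(\<lambda>\<phi>. \<phi> \<circ> inv \<sigma>) \<circ> (\<lambda>\<phi>. \<phi> \<circ> \<sigma>) = (\<lambda>\<phi>. \<phi>)"
    by (auto simp: fun_eq_iff tree_aut_apply_inv[OF s])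
  also have "distr \<mu> cfg_space (\<lambda>\<phi>. \<phi>) = \<mu>" by (rule distr_id2) (use S in simp)
  finally show ?thesis .
qed

lemma walk_law_troot_unique:
  assumes "walk_law w troot \<mu>" "walk_law w troot \<nu>"
  shows "\<mu> = \<nu>"
proof (rule cfg_measure_eqI[of \<mu> \<nu> 0])
  show "finite_measure \<mu>" using assms(1) by (simp add: walk_law_def prob_space.finite_measure)
  fix X assume "X \<in> tball_cylinders 0"
  then obtain R \<eta> where X: "X = cyl (tball R) \<eta>" by (auto simp: tball_cylinders_def)
  show "emeasure \<mu> X = emeasure \<nu> X"
    using assms rooted_subtree_tball unfolding X walk_law_iff
    by (simp add: finite_measure.emeasure_eq_measure prob_space.finite_measure)
qed (use assms in \<open>auto simp: walk_law_def\<close>)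

text \<open>By reversibility the law does not depend on the root: moving the root along an edge
  is the case \<open>troot\<close>/\<open>tgen c\<close> transported by an automorphism.\<close>
lemma walk_law_any_root:
  assumes W: "walk_law w troot \<mu>" and w: "positive_weights w"
  shows "walk_law w y \<mu>"
proof (induction "length (Rep_tvert y)" arbitrary: y)
  case 0 then have "y = troot" by (metis Rep_troot Rep_tvert_inject length_0_conv)
  then show ?case using W by simp
next
  case (Suc n)
  then have ne: "y \<noteq> troot" by (metis Rep_troot list.size(3) nat.distinct(1))
  let ?x = "tpar y"
  let ?\<sigma> = "tmult ?x"
  have \<sigma>: "tree_aut ?\<sigma>" by (rule tree_aut_tmult)
  have "walk_law w ?x \<mu>" using Suc by (simp add: Rep_tpar)
  moreover have "tadj ?x y" using tadj_tpar[OF ne] tadj_sym by blast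
  then obtain c where c: "c \<in> {0,1,2}" "y = ?\<sigma> (tgen c)" using tadj_imp_tmult_tgen by blast
  ultimately have "walk_law w troot (distr \<mu> cfg_space (\<lambda>\<phi>. \<phi> \<circ> ?\<sigma>))"
    using walk_law_tree_aut[OF \<sigma>, of w troot] by (simp add: tmult_troot)
  then have "walk_law w (inv ?\<sigma> y) (distr \<mu> cfg_space (\<lambda>\<phi>. \<phi> \<circ> ?\<sigma>))"
    using walk_law_troot_tgen[OF _ c(1) w] c(2) tree_aut_inv_apply[OF \<sigma>] by metis
  then have "walk_law w y (distr (distr \<mu> cfg_space (\<lambda>\<phi>. \<phi> \<circ> ?\<sigma>)) cfg_space (\<lambda>\<phi>. \<phi> \<circ> inv ?\<sigma>))"
    by (rule walk_law_tree_aut[OF tree_aut_inv[OF \<sigma>]])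
  then show ?case using distr_precompose_inv[OF \<sigma> walk_law_sets[OF W]] by simp
qed

lemma walk_law_invariant:
  assumes W: "walk_law w troot \<mu>" and w: "positive_weights w" and s: "tree_aut \<sigma>"
  shows "distr \<mu> cfg_space (\<lambda>\<phi>. \<phi> \<circ> \<sigma>) = \<mu>"
proof -
  have "walk_law w (\<sigma> troot) \<mu>" by (rule walk_law_any_root[OF W w])
  then have "walk_law w troot (distr \<mu> cfg_space (\<lambda>\<phi>. \<phi> \<circ> \<sigma>))" by (rule walk_law_tree_aut[OF s])
  then show ?thesis using W by (rule walk_law_troot_unique)
qed

lemma walk_law_unique:
  assumes W: "walk_law w troot \<mu>0" and w: "positive_weights w" and V: "walk_law w x \<mu>"
  shows "\<mu> = \<mu>0"
proof -
  let ?\<sigma> = "tmult x"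
  have \<sigma>: "tree_aut ?\<sigma>" by (rule tree_aut_tmult)
  have "walk_law w (?\<sigma> troot) \<mu>" using V by (simp add: tmult_troot)
  then have "walk_law w troot (distr \<mu> cfg_space (\<lambda>\<phi>. \<phi> \<circ> ?\<sigma>))" by (rule walk_law_tree_aut[OF \<sigma>])
  then have e: "distr \<mu> cfg_space (\<lambda>\<phi>. \<phi> \<circ> ?\<sigma>) = \<mu>0" using W by (rule walk_law_troot_unique)
  have "\<mu> = distr (distr \<mu> cfg_space (\<lambda>\<phi>. \<phi> \<circ> ?\<sigma>)) cfg_space (\<lambda>\<phi>. \<phi> \<circ> inv ?\<sigma>)"
    using distr_precompose_inv[OF \<sigma> walk_law_sets[OF V]] by simp
  also have "\<dots> = \<mu>0" unfolding e by (rule walk_law_invariant[OF W w tree_aut_inv[OF \<sigma>]])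
  finally show ?thesis .
qed

section \<open>Construction of the walk from independent noise\<close>

lemma embed_pmf_finite_support:
  fixes f :: "'a \<Rightarrow> real"
  assumes "finite A" and nonneg: "\<And>x. 0 \<le> f x" and supp: "\<And>x. x \<notin> A \<Longrightarrow> f x = 0"
    and sum: "(\<Sum>x\<in>A. f x) = 1"
  shows "pmf (embed_pmf f) x = f x" "set_pmf (embed_pmf f) \<subseteq> A"
proof -
  have "(\<integral>\<^sup>+x. ennreal (f x) \<partial>count_space UNIV) = (\<Sum>x\<in>A. ennreal (f x))"
    by (rule nn_integral_count_space') (auto simp: assms)
  also have "\<dots> = 1" using sum nonneg by (simp add: sum_ennreal)
  finally have P: "(\<integral>\<^sup>+x. ennreal (f x) \<partial>count_space UNIV) = 1" .
  show "pmf (embed_pmf f) x = f x" by (rule pmf_embed_pmf[OF nonneg P])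
  show "set_pmf (embed_pmf f) \<subseteq> A" using set_embed_pmf[OF nonneg P] supp by auto
qed

definition root_pmf :: "(nat \<Rightarrow> real) \<Rightarrow> nat pmf" where
  "root_pmf w = embed_pmf (root_prob w)"

definition step_pmf :: "(nat \<Rightarrow> real) \<Rightarrow> nat \<Rightarrow> nat pmf" where
  "step_pmf w i = (if i \<in> hnodes then embed_pmf (step_prob w i) else return_pmf 1)"

lemma pmf_root_pmf:
  assumes "positive_weights w"
  shows "pmf (root_pmf w) x = root_prob w x \<and> set_pmf (root_pmf w) \<subseteq> hnodes"
proof -
  have "\<And>x. x \<notin> hnodes \<Longrightarrow> root_prob w x = 0" by (simp add: root_prob_def)
  then show ?thesis unfolding root_pmf_def
    using embed_pmf_finite_support[OF finite_hnodes root_prob_nonneg[OF assms] _ sum_root_prob[OF assms]]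
    by blast
qed

lemma pmf_step_pmf:
  assumes "positive_weights w" "i \<in> hnodes"
  shows "pmf (step_pmf w i) x = step_prob w i x \<and> set_pmf (step_pmf w i) \<subseteq> hnodes"
proof -
  have "\<And>x. x \<notin> hnodes \<Longrightarrow> step_prob w i x = 0" using hadj_in_hnodes by (auto simp: step_prob_def)
  then show ?thesis unfolding step_pmf_def
    using assms(2) embed_pmf_finite_support[OF finite_hnodes step_prob_nonneg[OF assms(1)] _ sum_step_prob[OF assms]]
    by simp
qed

text \<open>The noise \<open>\<omega> (xs, i)\<close> is the spin that the word \<open>xs\<close> receives when its parent has spin \<open>i\<close>;
  all these choices are independent, and the spin of each site is read off recursively from
  its parent's.  Clamping to the hinge is a null modification making every sample a
  configuration.\<close>
definition noise_factor :: "(nat \<Rightarrow> real) \<Rightarrow> nat list \<times> nat \<Rightarrow> nat measure" where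
  "noise_factor w j = measure_pmf (if fst j = [] then root_pmf w else step_pmf w (snd j))"

definition walk_noise :: "(nat \<Rightarrow> real) \<Rightarrow> (nat list \<times> nat \<Rightarrow> nat) measure" where
  "walk_noise w = PiM UNIV (noise_factor w)"

definition clamp_node :: "nat \<Rightarrow> nat" where
  "clamp_node j = (if j \<in> hnodes then j else 1)"

fun spin_along :: "(nat list \<times> nat \<Rightarrow> nat) \<Rightarrow> nat list \<Rightarrow> nat" where
  "spin_along \<omega> [] = clamp_node (\<omega> ([], 0))"
| "spin_along \<omega> (c # ys) = clamp_node (\<omega> (rev (c # ys), spin_along \<omega> ys))"

definition walk_config :: "(nat list \<times> nat \<Rightarrow> nat) \<Rightarrow> tvert \<Rightarrow> nat" where
  "walk_config \<omega> v = spin_along \<omega> (rev (Rep_tvert v))"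

definition walk_measure :: "(nat \<Rightarrow> real) \<Rightarrow> (tvert \<Rightarrow> nat) measure" where
  "walk_measure w = distr (walk_noise w) cfg_space walk_config"

lemma clamp_node_in_hnodes: "clamp_node j \<in> hnodes"
  by (simp add: clamp_node_def hnodes_def)

lemma spin_along_in_hnodes: "spin_along \<omega> ys \<in> hnodes"
  by (cases ys) (auto simp: clamp_node_in_hnodes)

lemma walk_config_troot: "walk_config \<omega> troot = clamp_node (\<omega> ([], 0))"
  by (simp add: walk_config_def)

lemma walk_config_tpar:
  "v \<noteq> troot \<Longrightarrow> walk_config \<omega> v = clamp_node (\<omega> (Rep_tvert v, walk_config \<omega> (tpar v)))"
proof -
  assume "v \<noteq> troot"
  then obtain ys c where e: "Rep_tvert v = ys @ [c]" by (metis neq_troot_iff rev_exhaust)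
  show ?thesis unfolding walk_config_def Rep_tpar e by simp
qed

lemma prob_space_walk_noise: "prob_space (walk_noise w)"
  unfolding walk_noise_def noise_factor_def by (rule prob_space_PiM) (simp add: prob_space_measure_pmf)

lemma space_walk_noise: "space (walk_noise w) = UNIV"
  by (simp add: walk_noise_def space_PiM noise_factor_def)

lemma measurable_walk_config: "walk_config \<in> measurable (walk_noise w) cfg_space"
proof -
  have clamp: "(\<lambda>\<omega>. clamp_node (\<omega> j)) \<in> measurable (walk_noise w) (count_space hnodes)" for j
  proof -
    have "(\<lambda>\<omega>. \<omega> j) \<in> measurable (walk_noise w) (noise_factor w j)"
      unfolding walk_noise_def by (rule measurable_component_singleton) simp
    moreover have "clamp_node \<in> measurable (noise_factor w j) (count_space hnodes)"
      by (simp add: measurable_count_space_eq2 noise_factor_def clamp_node_in_hnodes)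
    ultimately show ?thesis by (rule measurable_compose[of _ _ "noise_factor w j"])
  qed
  have "(\<lambda>\<omega>. spin_along \<omega> ys) \<in> measurable (walk_noise w) (count_space hnodes)" for ys
  proof (induction ys)
    case (Cons c ys)
    have "(\<lambda>\<omega>. (\<lambda>i \<omega>. clamp_node (\<omega> (rev (c # ys), i))) (spin_along \<omega> ys) \<omega>)
        \<in> measurable (walk_noise w) (count_space hnodes)"
      by (rule measurable_compose_countable'[OF _ Cons]) (auto intro: clamp)
    then show ?case by simp
  qed (simp add: clamp)
  then have "(\<lambda>\<omega> v. walk_config \<omega> v) \<in> measurable (walk_noise w) (Pi\<^sub>M UNIV (\<lambda>_. count_space hnodes))"
    by (intro measurable_PiM_single')
      (auto simp: walk_config_def space_PiM spin_along_in_hnodes)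
  then show ?thesis by (simp add: cfg_space_def)
qed

text \<open>The noise coordinate that decides the spin of \<open>v\<close> once its parent has spin \<open>\<eta> (tpar v)\<close>.\<close>
definition noise_index :: "(tvert \<Rightarrow> nat) \<Rightarrow> tvert \<Rightarrow> nat list \<times> nat" where
  "noise_index \<eta> v = (Rep_tvert v, if v = troot then 0 else \<eta> (tpar v))"

lemma walk_config_eq_iff_noise:
  assumes cl: "\<And>v. v \<in> S - {troot} \<Longrightarrow> tpar v \<in> S"
  shows "(\<forall>v\<in>S. walk_config \<omega> v = \<eta> v) \<longleftrightarrow> (\<forall>v\<in>S. clamp_node (\<omega> (noise_index \<eta> v)) = \<eta> v)"
proof
  assume e: "\<forall>v\<in>S. walk_config \<omega> v = \<eta> v"
  show "\<forall>v\<in>S. clamp_node (\<omega> (noise_index \<eta> v)) = \<eta> v"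
  proof
    fix v assume v: "v \<in> S"
    show "clamp_node (\<omega> (noise_index \<eta> v)) = \<eta> v"
    proof (cases "v = troot")
      case True then show ?thesis using e v walk_config_troot[of \<omega>] by (simp add: noise_index_def)
    next
      case False
      then have "walk_config \<omega> v = clamp_node (\<omega> (Rep_tvert v, walk_config \<omega> (tpar v)))"
        by (rule walk_config_tpar)
      moreover have "walk_config \<omega> (tpar v) = \<eta> (tpar v)" using e cl[of v] v False by auto
      ultimately show ?thesis using e v False by (simp add: noise_index_def)
    qed
  qed
next
  assume a: "\<forall>v\<in>S. clamp_node (\<omega> (noise_index \<eta> v)) = \<eta> v"
  show "\<forall>v\<in>S. walk_config \<omega> v = \<eta> v"
  proof
    fix v assume "v \<in> S"
    then show "walk_config \<omega> v = \<eta> v"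
    proof (induction "length (Rep_tvert v)" arbitrary: v rule: less_induct)
      case less
      show ?case
      proof (cases "v = troot")
        case True then show ?thesis using a less by (auto simp: noise_index_def walk_config_troot)
      next
        case False
        have "walk_config \<omega> (tpar v) = \<eta> (tpar v)"
          using less(1)[of "tpar v"] cl[of v] less(2) False by (auto simp: Rep_tpar neq_troot_iff)
        then show ?thesis
          using a less(2) False walk_config_tpar[OF False, of \<omega>] by (auto simp: noise_index_def)
      qed
    qed
  qed
qed

lemma walk_config_vimage_cyl:
  assumes R: "rooted_subtree troot S"
  shows "walk_config -` cyl S \<eta> \<inter> space (walk_noise w) =
    {\<omega>. \<forall>v\<in>S. clamp_node (\<omega> (noise_index \<eta> v)) = \<eta> v}"
proof -
  have "(\<forall>v\<in>S. walk_config \<omega> v = \<eta> v) \<longleftrightarrow> (\<forall>v\<in>S. clamp_node (\<omega> (noise_index \<eta> v)) = \<eta> v)" for \<omega>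
    using R by (intro walk_config_eq_iff_noise) (auto simp: rooted_subtree_def tparent_troot)
  moreover have "walk_config \<omega> \<in> space cfg_space" for \<omega>
    using measurable_space[OF measurable_walk_config, of \<omega> w] by (simp add: space_walk_noise)
  ultimately show ?thesis by (auto simp: cyl_def space_walk_noise)
qed

lemma emeasure_clamp_node_vimage:
  assumes "set_pmf p \<subseteq> hnodes" "k \<in> hnodes"
  shows "emeasure (measure_pmf p) (clamp_node -` {k}) = pmf p k"
proof -
  have "clamp_node -` {k} \<inter> set_pmf p = {k} \<inter> set_pmf p" using assms by (auto simp: clamp_node_def)
  then show ?thesis by (metis emeasure_Int_set_pmf emeasure_pmf_single)
qed

lemma measure_walk_noise_clamp:
  assumes w: "positive_weights w" and R: "rooted_subtree troot S" and \<eta>: "\<forall>v\<in>S. \<eta> v \<in> hnodes"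
  shows "measure (walk_noise w) {\<omega>. \<forall>v\<in>S. clamp_node (\<omega> (noise_index \<eta> v)) = \<eta> v} =
    (\<Prod>v\<in>S. if v = troot then root_prob w (\<eta> v) else step_prob w (\<eta> (tpar v)) (\<eta> v))"
proof -
  have fS: "finite S" and cl: "\<And>v. v \<in> S - {troot} \<Longrightarrow> tpar v \<in> S"
    using R by (auto simp: rooted_subtree_def tparent_troot)
  let ?\<iota> = "noise_index \<eta>"
  define X where "X j = clamp_node -` {\<eta> (Abs_tvert (fst j))}" for j :: "nat list \<times> nat"
  have X: "X (?\<iota> v) = clamp_node -` {\<eta> v}" for v
    by (simp add: X_def noise_index_def Rep_tvert_inverse)
  have inj: "inj_on ?\<iota> S" by (auto simp: inj_on_def noise_index_def Rep_tvert_inject)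
  have nonneg: "0 \<le> (if v = troot then root_prob w (\<eta> v) else step_prob w (\<eta> (tpar v)) (\<eta> v))" for v
    by (simp add: root_prob_nonneg[OF w] step_prob_nonneg[OF w])
  have emb: "{\<omega>. \<forall>v\<in>S. clamp_node (\<omega> (?\<iota> v)) = \<eta> v} =
      prod_emb UNIV (noise_factor w) (?\<iota> ` S) (PiE (?\<iota> ` S) X)"
    unfolding prod_emb_def space_PiM noise_factor_def
    by (auto simp: PiE_def Pi_def extensional_def X simp del: split_paired_All)
  have "measure (walk_noise w) {\<omega>. \<forall>v\<in>S. clamp_node (\<omega> (?\<iota> v)) = \<eta> v} =
      enn2real (\<Prod>j\<in>?\<iota> ` S. emeasure (noise_factor w j) (X j))"
    unfolding emb measure_def walk_noise_def
    by (subst emeasure_PiM_emb) (auto simp: noise_factor_def prob_space_measure_pmf fS)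
  also have "(\<Prod>j\<in>?\<iota> ` S. emeasure (noise_factor w j) (X j)) =
      (\<Prod>v\<in>S. emeasure (noise_factor w (?\<iota> v)) (clamp_node -` {\<eta> v}))"
    by (simp add: prod.reindex[OF inj] X)
  also have "(\<Prod>v\<in>S. emeasure (noise_factor w (?\<iota> v)) (clamp_node -` {\<eta> v})) =
      (\<Prod>v\<in>S. ennreal (if v = troot then root_prob w (\<eta> v) else step_prob w (\<eta> (tpar v)) (\<eta> v)))"
  proof (rule prod.cong[OF refl])
    fix v assume v: "v \<in> S"
    show "emeasure (noise_factor w (?\<iota> v)) (clamp_node -` {\<eta> v}) =
      ennreal (if v = troot then root_prob w (\<eta> v) else step_prob w (\<eta> (tpar v)) (\<eta> v))"
    proof (cases "v = troot")
      case True
      then show ?thesis using emeasure_clamp_node_vimage pmf_root_pmf[OF w] \<eta> v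
        by (simp add: noise_factor_def noise_index_def)
    next
      case False
      then have "\<eta> (tpar v) \<in> hnodes" "Rep_tvert v \<noteq> []" using cl[of v] v \<eta> neq_troot_iff by auto
      then show ?thesis using emeasure_clamp_node_vimage pmf_step_pmf[OF w] \<eta> v False
        by (simp add: noise_factor_def noise_index_def)
    qed
  qed
  finally show ?thesis using nonneg by (simp add: prod_ennreal prod_nonneg)
qed

lemma walk_measure_cyl:
  assumes w: "positive_weights w" and R: "rooted_subtree troot S"
  shows "measure (walk_measure w) (cyl S \<eta>) = walk_weight w troot S \<eta>"
proof (cases "\<forall>v\<in>S. \<eta> v \<in> hnodes")
  case False
  then obtain v where v: "v \<in> S" "\<eta> v \<notin> hnodes" by blast
  moreover have "finite S" using R by (simp add: rooted_subtree_def)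
  ultimately show ?thesis using cyl_eq_empty[of v S \<eta>] walk_weight_eq_0[of S v \<eta>] v by simp
next
  case True
  have fS: "finite S" and r: "troot \<in> S" using R by (auto simp: rooted_subtree_def)
  have "measure (walk_measure w) (cyl S \<eta>) =
      measure (walk_noise w) (walk_config -` cyl S \<eta> \<inter> space (walk_noise w))"
    unfolding walk_measure_def by (rule measure_distr[OF measurable_walk_config cyl_in_sets[OF fS]])
  also have "\<dots> = (\<Prod>v\<in>S. if v = troot then root_prob w (\<eta> v) else step_prob w (\<eta> (tpar v)) (\<eta> v))"
    unfolding walk_config_vimage_cyl[OF R] by (rule measure_walk_noise_clamp[OF w R True])
  also have "\<dots> = walk_weight w troot S \<eta>"
    unfolding walk_weight_def prod.remove[OF fS r] by (auto intro!: prod.cong simp: tparent_troot)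
  finally show ?thesis .
qed

lemma walk_law_walk_measure: "positive_weights w \<Longrightarrow> walk_law w troot (walk_measure w)"
  unfolding walk_law_iff walk_measure_def
  using prob_space.prob_space_distr[OF prob_space_walk_noise measurable_walk_config]
    walk_measure_cyl[unfolded walk_measure_def]
  by simp

section \<open>Independence of the branches\<close>

lemma INT_cyl_same: "J \<noteq> {} \<Longrightarrow> (\<Inter>j\<in>J. cyl (S j) \<zeta>) = cyl (\<Union>j\<in>J. S j) \<zeta>"
  by (auto simp: cyl_def)

text \<open>An instance of the Doob--Dynkin lemma.\<close>
lemma comp_events_subset_sigma_sets:
  assumes G: "G \<subseteq> Pow (space cfg_space)"
    and spin: "\<And>x j. x \<in> C \<Longrightarrow> {\<phi> \<in> space cfg_space. \<phi> x = j} \<in> sigma_sets (space cfg_space) G"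
  shows "comp_events C \<subseteq> sigma_sets (space cfg_space) G"
proof
  fix A assume A: "A \<in> comp_events C"
  let ?M = "sigma (space cfg_space) G"
  let ?p = "\<lambda>\<phi>. merge_cfg C \<phi> (\<lambda>_. 1)"
  have sM: "sets ?M = sigma_sets (space cfg_space) G" "space ?M = space cfg_space"
    using G by (simp_all add: sets_measure_of space_measure_of)
  have p_space: "?p \<phi> \<in> space cfg_space" if "\<phi> \<in> space cfg_space" for \<phi>
    using that one_in_hnodes by (auto simp: space_cfg_space merge_cfg_def)
  have "(\<lambda>\<phi>. ?p \<phi> x) \<in> measurable ?M (count_space hnodes)" for x
  proof (cases "x \<in> C")
    case True
    have "(\<lambda>\<phi>. \<phi> x) \<in> measurable ?M (count_space hnodes)"
    proof (subst measurable_count_space_eq2[OF finite_hnodes], intro conjI ballI)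
      show "(\<lambda>\<phi>. \<phi> x) \<in> space ?M \<rightarrow> hnodes" using sM by (auto simp: space_cfg_space)
      fix j
      have "(\<lambda>\<phi>. \<phi> x) -` {j} \<inter> space ?M = {\<phi> \<in> space cfg_space. \<phi> x = j}" using sM by auto
      then show "(\<lambda>\<phi>. \<phi> x) -` {j} \<inter> space ?M \<in> sets ?M" using spin[OF True] sM by simp
    qed
    then show ?thesis using True by (simp add: merge_cfg_def)
  qed (auto simp: merge_cfg_def hnodes_def intro: measurable_const)
  then have "(\<lambda>\<phi> x. ?p \<phi> x) \<in> measurable ?M (Pi\<^sub>M UNIV (\<lambda>_. count_space hnodes))"
    using p_space sM by (intro measurable_PiM_single') (auto simp: space_cfg_space_PiE)
  then have "?p -` A \<inter> space ?M \<in> sets ?M"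
    using A by (intro measurable_sets[of _ _ cfg_space]) (auto simp: cfg_space_def comp_events_def)
  moreover have "?p -` A \<inter> space ?M = A"
  proof -
    have determined: "\<And>\<phi> \<psi>. \<phi> \<in> space cfg_space \<Longrightarrow> \<psi> \<in> space cfg_space \<Longrightarrow>
        \<forall>v\<in>C. \<phi> v = \<psi> v \<Longrightarrow> \<phi> \<in> A \<longleftrightarrow> \<psi> \<in> A"
      using A unfolding comp_events_def by blast
    have "?p \<phi> \<in> A \<longleftrightarrow> \<phi> \<in> A" if "\<phi> \<in> space cfg_space" for \<phi>
      by (rule determined[OF p_space[OF that] that]) (simp add: merge_cfg_def)
    moreover have "A \<subseteq> space cfg_space"
      using A sets.sets_into_space by (auto simp: comp_events_def)
    ultimately show ?thesis using sM by blast
  qed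
  ultimately show "A \<in> sigma_sets (space cfg_space) G" using sM by simp
qed

definition branch_cylinders :: "tvert \<Rightarrow> tvert \<Rightarrow> (tvert \<Rightarrow> nat) set set" where
  "branch_cylinders u v =
    {cyl S \<eta> | S \<eta>. finite S \<and> S \<subseteq> tcomp u v \<and> (\<forall>s\<in>S. tparent u s \<in> insert u S)}"

lemma branch_cylinders_Pow: "branch_cylinders u v \<subseteq> Pow (space cfg_space)"
  by (auto simp: branch_cylinders_def cyl_def)

lemma Int_stable_branch_cylinders: "tadj u v \<Longrightarrow> Int_stable (branch_cylinders u v)"
proof (rule Int_stableI)
  assume a: "tadj u v"
  fix A B assume "A \<in> branch_cylinders u v" "B \<in> branch_cylinders u v"
  then obtain S1 S2 \<eta>1 \<eta>2
    where A: "A = cyl S1 \<eta>1" "finite S1" "S1 \<subseteq> tcomp u v" "\<forall>s\<in>S1. tparent u s \<in> insert u S1"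
      and B: "B = cyl S2 \<eta>2" "finite S2" "S2 \<subseteq> tcomp u v" "\<forall>s\<in>S2. tparent u s \<in> insert u S2"
    unfolding branch_cylinders_def by blast
  show "A \<inter> B \<in> branch_cylinders u v"
  proof (cases "\<forall>v\<in>S1 \<inter> S2. \<eta>1 v = \<eta>2 v")
    case True
    then have "A \<inter> B = cyl (S1 \<union> S2) (\<lambda>v. if v \<in> S1 then \<eta>1 v else \<eta>2 v)" using A B cyl_Int by simp
    moreover have "finite (S1 \<union> S2)" "S1 \<union> S2 \<subseteq> tcomp u v"
      "\<forall>s\<in>S1 \<union> S2. tparent u s \<in> insert u (S1 \<union> S2)"
      using A B by auto
    ultimately show ?thesis unfolding branch_cylinders_def by blast
  next
    case False
    have "A \<inter> B = {}" unfolding A(1) B(1) cyl_Int using False by (rule if_not_P)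
    also have "{} = cyl {v} (\<lambda>_. 0)" by (rule cyl_eq_empty[symmetric]) (auto simp: hnodes_def)
    finally have "A \<inter> B = cyl {v} (\<lambda>_. 0)" .
    moreover have "{v} \<subseteq> tcomp u v" "\<forall>s\<in>{v}. tparent u s \<in> insert u {v}"
      using tcomp_self[of v u] tparent_tadj[OF a] by auto
    ultimately show ?thesis unfolding branch_cylinders_def by blast
  qed
qed

lemma comp_events_subset_branch_cylinders:
  assumes a: "tadj u v"
  shows "comp_events (tcomp u v) \<subseteq> sigma_sets (space cfg_space) (branch_cylinders u v)"
proof (rule comp_events_subset_sigma_sets[OF branch_cylinders_Pow])
  fix x j assume x: "x \<in> tcomp u v"
  obtain S where S: "finite S" "S \<subseteq> tcomp u v" "x \<in> S" "\<forall>s\<in>S. tparent u s \<in> insert u S"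
    using tcomp_subtree_cover[OF a x] by blast
  have "{\<phi> \<in> space cfg_space. \<phi> x = j} = {\<phi> \<in> space cfg_space. restrict \<phi> S \<in> {\<eta>. \<eta> x = j}}"
    using S(3) by auto
  also have "\<dots> \<in> sigma_sets (space cfg_space) (branch_cylinders u v)"
    using S by (intro restrict_event_in_sigma_sets sigma_sets.Basic) (auto simp: branch_cylinders_def)
  finally show "{\<phi> \<in> space cfg_space. \<phi> x = j} \<in> sigma_sets (space cfg_space) (branch_cylinders u v)" .
qed

lemma walk_law_measure_branch:
  assumes W: "walk_law w u \<mu>" and S: "finite S" "u \<notin> S" "\<forall>s\<in>S. tparent u s \<in> insert u S"
  shows "measure \<mu> (cyl {u} (\<lambda>_. \<zeta> u) \<inter> cyl S \<zeta>) =
    root_prob w (\<zeta> u) * (\<Prod>v\<in>S. step_prob w (\<zeta> (tparent u v)) (\<zeta> v))"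
proof -
  have "cyl {u} (\<lambda>_. \<zeta> u) \<inter> cyl S \<zeta> = cyl (insert u S) \<zeta>" by (auto simp: cyl_def)
  moreover have "rooted_subtree u (insert u S)" using S by (auto simp: rooted_subtree_def)
  moreover have "insert u S - {u} = S" using S by auto
  ultimately show ?thesis using W by (simp add: walk_law_iff walk_weight_def)
qed

lemma ex_glued_cyl_config:
  assumes disj: "\<And>j1 j2. j1 \<in> J \<Longrightarrow> j2 \<in> J \<Longrightarrow> j1 \<noteq> j2 \<Longrightarrow> S j1 \<inter> S j2 = {}"
    and u: "\<And>j. j \<in> J \<Longrightarrow> u \<notin> S j"
  shows "\<exists>\<zeta>. \<zeta> u = i \<and> (\<forall>j\<in>J. cyl (S j) (\<eta> j) = cyl (S j) \<zeta>)"
proof (intro exI conjI ballI)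
  let ?\<zeta> = "\<lambda>v. if v = u then i else \<eta> (SOME j. j \<in> J \<and> v \<in> S j) v"
  have "?\<zeta> v = \<eta> j v" if "j \<in> J" "v \<in> S j" for j v
  proof -
    have "(SOME j. j \<in> J \<and> v \<in> S j) = j" using that disj by blast
    then show ?thesis using u that by auto
  qed
  then show "cyl (S j) (\<eta> j) = cyl (S j) ?\<zeta>" if "j \<in> J" for j
    using that by (auto simp: cyl_def)
qed simp

text \<open>The weight of a cylinder on a union of branches factorises over the branches.\<close>
lemma walk_law_indep_branch_cylinders:
  assumes W: "walk_law w u \<mu>" and pos: "root_prob w i > 0"
  shows "prob_space.indep_sets (uniform_measure \<mu> (cyl {u} (\<lambda>_. i))) (branch_cylinders u) {v. tadj u v}"
proof -
  let ?B = "cyl {u} (\<lambda>_. i)"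
  have Se: "sets \<mu> = sets cfg_space" using W by (rule walk_law_sets)
  interpret M: prob_space \<mu> using W by (simp add: walk_law_def)
  have mB: "measure \<mu> ?B = root_prob w i" using W by (rule walk_law_cyl_singleton)
  have e1: "emeasure \<mu> ?B \<noteq> 0" "emeasure \<mu> ?B \<noteq> \<infinity>" using mB pos by (auto simp: M.emeasure_eq_measure)
  interpret Q: prob_space "uniform_measure \<mu> ?B" by (rule prob_space_uniform_measure[OF e1])
  have pQ: "Q.prob X = measure \<mu> (?B \<inter> X) / root_prob w i" if "X \<in> sets \<mu>" for X
    using measure_uniform_measure[OF e1 that] mB by simp
  show ?thesis unfolding Q.indep_sets_def
  proof (intro conjI ballI allI impI)
    fix v show "branch_cylinders u v \<subseteq> Q.events" using Se cyl_in_sets by (auto simp: branch_cylinders_def)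
  next
    fix J A assume J: "J \<subseteq> {v. tadj u v}" "J \<noteq> {}" "finite J" and A: "A \<in> Pi J (branch_cylinders u)"
    obtain S \<eta> where A_eq: "\<And>j. j \<in> J \<Longrightarrow> A j = cyl (S j) (\<eta> j)"
      and fS: "\<And>j. j \<in> J \<Longrightarrow> finite (S j)" and Sc: "\<And>j. j \<in> J \<Longrightarrow> S j \<subseteq> tcomp u j"
      and cl: "\<And>j. j \<in> J \<Longrightarrow> \<forall>s\<in>S j. tparent u s \<in> insert u (S j)"
      using A unfolding branch_cylinders_def Pi_def by simp metis
    have disj: "\<And>j1 j2. j1 \<in> J \<Longrightarrow> j2 \<in> J \<Longrightarrow> j1 \<noteq> j2 \<Longrightarrow> S j1 \<inter> S j2 = {}"
      using disjoint_tcomp Sc J(1) by blast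
    have uS: "\<And>j. j \<in> J \<Longrightarrow> u \<notin> S j" using notin_tcomp_self Sc J(1) by blast
    have "\<exists>\<zeta>. \<zeta> u = i \<and> (\<forall>j\<in>J. cyl (S j) (\<eta> j) = cyl (S j) \<zeta>)"
      by (rule ex_glued_cyl_config) (use disj uS in auto)
    then obtain \<zeta> where \<zeta>u: "\<zeta> u = i" and A_\<zeta>: "\<And>j. j \<in> J \<Longrightarrow> A j = cyl (S j) \<zeta>"
      using A_eq by metis
    define g where "g j = (\<Prod>v\<in>S j. step_prob w (\<zeta> (tparent u v)) (\<zeta> v))" for j
    have QA: "Q.prob (A j) = g j" if j: "j \<in> J" for j
      using pQ[of "A j"] walk_law_measure_branch[OF W fS[OF j] uS[OF j] cl[OF j], of \<zeta>] pos
      by (simp add: A_\<zeta>[OF j] \<zeta>u g_def Se cyl_in_sets fS[OF j])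
    have "Q.prob (\<Inter>j\<in>J. A j) = measure \<mu> (?B \<inter> cyl (\<Union>j\<in>J. S j) \<zeta>) / root_prob w i"
      using pQ[of "cyl (\<Union>j\<in>J. S j) \<zeta>"] J fS Se A_\<zeta> by (simp add: INT_cyl_same cyl_in_sets)
    also have "\<dots> = (\<Prod>v\<in>(\<Union>j\<in>J. S j). step_prob w (\<zeta> (tparent u v)) (\<zeta> v))"
    proof -
      have "finite (\<Union>j\<in>J. S j)" "u \<notin> (\<Union>j\<in>J. S j)"
        "\<forall>s\<in>(\<Union>j\<in>J. S j). tparent u s \<in> insert u (\<Union>j\<in>J. S j)"
        using J(3) fS uS cl by fast+
      from walk_law_measure_branch[OF W this, of \<zeta>] show ?thesis using pos by (simp add: \<zeta>u)
    qed
    also have "\<dots> = (\<Prod>j\<in>J. g j)"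
      unfolding g_def by (rule prod.UNION_disjoint) (use J(3) fS disj in auto)
    also have "\<dots> = (\<Prod>j\<in>J. Q.prob (A j))" using QA by simp
    finally show "Q.prob (\<Inter>j\<in>J. A j) = (\<Prod>j\<in>J. Q.prob (A j))" .
  qed
qed

lemma walk_law_indep_components:
  assumes W: "walk_law w troot \<mu>" and w: "positive_weights w"
    and pos: "measure \<mu> {\<phi> \<in> space \<mu>. \<phi> u = i} > 0"
  shows "prob_space.indep_sets (uniform_measure \<mu> {\<phi> \<in> space \<mu>. \<phi> u = i})
            (\<lambda>v. comp_events (tcomp u v)) {v. tadj u v}"
proof -
  have Wu: "walk_law w u \<mu>" by (rule walk_law_any_root[OF W w])
  have sp: "space \<mu> = space cfg_space" using walk_law_sets[OF W] by (rule sets_eq_imp_space_eq)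
  have B: "{\<phi> \<in> space \<mu>. \<phi> u = i} = cyl {u} (\<lambda>_. i)" by (simp add: cyl_def sp)
  have rpos: "root_prob w i > 0" using pos walk_law_cyl_singleton[OF Wu] by (simp add: B)
  interpret M: prob_space \<mu> using W by (simp add: walk_law_def)
  have "emeasure \<mu> (cyl {u} (\<lambda>_. i)) \<noteq> 0" "emeasure \<mu> (cyl {u} (\<lambda>_. i)) \<noteq> \<infinity>"
    using walk_law_cyl_singleton[OF Wu] rpos by (auto simp: M.emeasure_eq_measure)
  then interpret Q: prob_space "uniform_measure \<mu> (cyl {u} (\<lambda>_. i))" by (rule prob_space_uniform_measure)
  have "Q.indep_sets (\<lambda>v. sigma_sets (space (uniform_measure \<mu> (cyl {u} (\<lambda>_. i))))
      (branch_cylinders u v)) {v. tadj u v}"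
    by (rule Q.indep_sets_sigma[OF walk_law_indep_branch_cylinders[OF Wu rpos]])
      (simp add: Int_stable_branch_cylinders)
  then have "Q.indep_sets (\<lambda>v. comp_events (tcomp u v)) {v. tadj u v}"
    by (rule Q.indep_sets_mono_sets) (use comp_events_subset_branch_cylinders sp in auto)
  then show ?thesis unfolding B .
qed

definition num_children :: "tvert set \<Rightarrow> tvert \<Rightarrow> nat" where
  "num_children T v = card {s \<in> T - {troot}. tpar s = v}"

lemma prod_tpar_eq_prod_power_num_children:
  fixes f :: "tvert \<Rightarrow> 'a::comm_monoid_mult"
  assumes "finite T" "\<And>v. v \<in> T - {troot} \<Longrightarrow> tpar v \<in> T"
  shows "(\<Prod>v\<in>T - {troot}. f (tpar v)) = (\<Prod>u\<in>T. f u ^ num_children T u)"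
proof -
  have "(\<Prod>v\<in>T - {troot}. f (tpar v)) = (\<Prod>u\<in>T. \<Prod>v\<in>{x \<in> T - {troot}. tpar x = u}. f (tpar v))"
    by (rule prod.group[symmetric]) (use assms in auto)
  also have "\<dots> = (\<Prod>u\<in>T. f u ^ num_children T u)"
  proof (rule prod.cong[OF refl])
    fix u
    have "(\<Prod>v\<in>{x \<in> T - {troot}. tpar x = u}. f (tpar v)) = (\<Prod>v\<in>{x \<in> T - {troot}. tpar x = u}. f u)"
      by (rule prod.cong) auto
    then show "(\<Prod>v\<in>{x \<in> T - {troot}. tpar x = u}. f (tpar v)) = f u ^ num_children T u"
      by (simp add: num_children_def)
  qed
  finally show ?thesis .
qed

definition tchild :: "tvert \<Rightarrow> nat \<Rightarrow> tvert" where
  "tchild v d = Abs_tvert (Rep_tvert v @ [d])"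

lemma num_children_tball:
  assumes v: "length (Rep_tvert v) < R"
  shows "num_children (tball R) v = (if v = troot then 3 else 2)"
proof -
  define Dv where "Dv = {d \<in> {0,1,2::nat}. Rep_tvert v = [] \<or> last (Rep_tvert v) \<noteq> d}"
  have Rc: "Rep_tvert (tchild v d) = Rep_tvert v @ [d]" if "d \<in> Dv" for d
    unfolding tchild_def
    by (rule Rep_Abs_tvert) (use that reduced_Rep_tvert[of v] in \<open>auto simp: Dv_def reduced_snoc\<close>)
  have eq: "{s \<in> tball R - {troot}. tpar s = v} = tchild v ` Dv"
  proof (intro set_eqI iffI)
    fix s assume s: "s \<in> {s \<in> tball R - {troot}. tpar s = v}"
    then have "Rep_tvert s \<noteq> []" "butlast (Rep_tvert s) = Rep_tvert v"
      by (auto simp: neq_troot_iff Rep_tpar[symmetric])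
    then have es: "Rep_tvert s = Rep_tvert v @ [last (Rep_tvert s)]" by (metis append_butlast_last_id)
    then have "reduced (Rep_tvert v @ [last (Rep_tvert s)])" using reduced_Rep_tvert[of s] by simp
    then have d: "last (Rep_tvert s) \<in> Dv" by (auto simp: Dv_def reduced_snoc)
    have "s = tchild v (last (Rep_tvert s))" using Rc[OF d] es by (metis Rep_tvert_inject)
    then show "s \<in> tchild v ` Dv" by (rule image_eqI[OF _ d])
  next
    fix s assume "s \<in> tchild v ` Dv"
    then obtain d where "d \<in> Dv" "s = tchild v d" by blast
    then have "Rep_tvert s = Rep_tvert v @ [d]" using Rc by simp
    then show "s \<in> {s \<in> tball R - {troot}. tpar s = v}"
      using v by (auto simp: tball_def neq_troot_iff tpar_def Rep_tvert_inverse)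
  qed
  have inj: "inj_on (tchild v) Dv"
    by (rule inj_onI) (metis Rc same_append_eq list.inject)
  have "card Dv = (if v = troot then 3 else 2)"
  proof (cases "v = troot")
    case True
    then have "Dv = {0,1,2}" by (auto simp: Dv_def)
    then show ?thesis using True by simp
  next
    case False
    then have ne: "Rep_tvert v \<noteq> []" by (simp add: neq_troot_iff)
    then have "last (Rep_tvert v) \<in> {0,1,2}" using set_Rep_tvert[of v] last_in_set by blast
    moreover have "Dv = {0,1,2} - {last (Rep_tvert v)}" using ne by (auto simp: Dv_def)
    ultimately show ?thesis using False by auto
  qed
  then show ?thesis unfolding num_children_def eq card_image[OF inj] .
qed

text \<open>Collecting the factor \<open>w\<^sub>j / z\<^sub>i\<close> of each edge at its endpoints gives the site \<open>v\<close>
  the factor \<open>w\<^sub>j / z\<^sub>j\<^sup>c\<close>, \<open>c\<close> the number of children of \<open>v\<close>, times \<open>z\<^sub>j\<close> at the root.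
  Every site strictly inside the ball has degree 3 in the ball, so its factor is the activity
  \<open>w\<^sub>j / z\<^sub>j\<^sup>2\<close>.\<close>
definition site_factor :: "(nat \<Rightarrow> real) \<Rightarrow> tvert set \<Rightarrow> tvert \<Rightarrow> nat \<Rightarrow> real" where
  "site_factor w T v j = w j * (if v = troot then hz w j else 1) / hz w j ^ num_children T v"

lemma site_factor_inner:
  assumes w: "positive_weights w" and v: "length (Rep_tvert v) < R" and j: "j \<in> hnodes"
  shows "site_factor w (tball R) v j = lam_of w j"
  using hz_pos[OF w j] unfolding site_factor_def lam_of_def num_children_tball[OF v]
  by (cases "v = troot") (simp_all add: power2_eq_square power3_eq_cube)

lemma walk_weight_tball_factor:
  assumes w: "positive_weights w" and hn: "\<forall>v\<in>tball R. \<zeta> v \<in> hnodes"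
  shows "walk_weight w troot (tball R) \<zeta> =
    (if \<forall>v\<in>tball R - {troot}. hadj (\<zeta> (tpar v)) (\<zeta> v) then 1 else 0) *
    (\<Prod>v\<in>tball R. site_factor w (tball R) v (\<zeta> v)) / walk_norm w"
proof -
  let ?T = "tball R"
  have fT: "finite ?T" and r: "troot \<in> ?T" by (rule finite_tball, rule troot_in_tball)
  have cl: "\<And>v. v \<in> ?T - {troot} \<Longrightarrow> tpar v \<in> ?T" by (auto simp: tball_def Rep_tpar)
  have step: "(\<Prod>v\<in>?T - {troot}. step_prob w (\<zeta> (tparent troot v)) (\<zeta> v)) =
      (if \<forall>v\<in>?T - {troot}. hadj (\<zeta> (tpar v)) (\<zeta> v) then 1 else 0) *
      ((\<Prod>v\<in>?T - {troot}. w (\<zeta> v)) / (\<Prod>u\<in>?T. hz w (\<zeta> u) ^ num_children ?T u))"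
  proof (cases "\<forall>v\<in>?T - {troot}. hadj (\<zeta> (tpar v)) (\<zeta> v)")
    case True
    then have "(\<Prod>v\<in>?T - {troot}. step_prob w (\<zeta> (tparent troot v)) (\<zeta> v)) =
        (\<Prod>v\<in>?T - {troot}. w (\<zeta> v) / hz w (\<zeta> (tpar v)))"
      by (intro prod.cong) (auto simp: step_prob_def tparent_troot)
    then show ?thesis
      using True prod_tpar_eq_prod_power_num_children[OF fT cl, of "\<lambda>u. hz w (\<zeta> u)"]
      by (simp add: prod_dividef)
  next
    case False
    then obtain v where "v \<in> ?T - {troot}" "\<not> hadj (\<zeta> (tpar v)) (\<zeta> v)" by blast
    then show ?thesis
      using fT by (auto intro!: prod_zero bexI[of _ v] simp: step_prob_def tparent_troot)
  qed
  have sites: "(\<Prod>v\<in>?T. site_factor w ?T v (\<zeta> v)) =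
      w (\<zeta> troot) * hz w (\<zeta> troot) * (\<Prod>v\<in>?T - {troot}. w (\<zeta> v)) /
      (\<Prod>u\<in>?T. hz w (\<zeta> u) ^ num_children ?T u)"
    unfolding site_factor_def using fT r
    by (simp add: prod_dividef prod.distrib prod.delta prod.remove[OF fT r] mult_ac)
  show ?thesis
    unfolding walk_weight_def step sites using hn r by (simp add: root_prob_eq)
qed

definition outer_hom :: "tvert set \<Rightarrow> nat \<Rightarrow> (tvert \<Rightarrow> nat) \<Rightarrow> bool" where
  "outer_hom U R \<xi> \<longleftrightarrow> (\<forall>v\<in>tball R - {troot}. v \<notin> U \<and> tpar v \<notin> U \<longrightarrow> hadj (\<xi> (tpar v)) (\<xi> v))"

lemma tadj_length_le: "tadj a b \<Longrightarrow> length (Rep_tvert b) \<le> Suc (length (Rep_tvert a))"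
  unfolding tadj_def by auto

lemma hom_on_tball_iff:
  assumes U: "\<forall>v\<in>U. length (Rep_tvert v) < R"
  shows "(\<forall>v\<in>tball R - {troot}. hadj (merge_cfg U \<eta> \<xi> (tpar v)) (merge_cfg U \<eta> \<xi> v)) \<longleftrightarrow>
     (\<forall>a b. a \<in> U \<and> tadj a b \<longrightarrow> hadj (merge_cfg U \<eta> \<xi> a) (merge_cfg U \<eta> \<xi> b)) \<and> outer_hom U R \<xi>"
  (is "?L \<longleftrightarrow> ?E \<and> ?R")
proof
  assume L: ?L
  show "?E \<and> ?R"
  proof
    show ?E
    proof (intro allI impI)
      fix a b assume ab: "a \<in> U \<and> tadj a b"
      have aR: "a \<in> tball R" using U ab by (auto simp: tball_def)
      from tadj_tpar_cases ab consider "a \<noteq> troot" "b = tpar a" | "b \<noteq> troot" "a = tpar b" by blast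
      then show "hadj (merge_cfg U \<eta> \<xi> a) (merge_cfg U \<eta> \<xi> b)"
      proof cases
        case 1 then show ?thesis using L aR hadj_sym by blast
      next
        case 2
        have "b \<in> tball R" using tadj_length_le[of a b] ab U by (auto simp: tball_def)
        then show ?thesis using L 2 by blast
      qed
    qed
    show ?R unfolding outer_hom_def
    proof (intro ballI impI)
      fix v assume v: "v \<in> tball R - {troot}" "v \<notin> U \<and> tpar v \<notin> U"
      then have "hadj (merge_cfg U \<eta> \<xi> (tpar v)) (merge_cfg U \<eta> \<xi> v)" using L by blast
      then show "hadj (\<xi> (tpar v)) (\<xi> v)" using v(2) by (simp add: merge_cfg_def)
    qed
  qed
next
  assume ER: "?E \<and> ?R"
  show ?L
  proof
    fix v assume v: "v \<in> tball R - {troot}"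
    have t: "tadj v (tpar v)" "tadj (tpar v) v" using tadj_tpar v tadj_sym by auto
    show "hadj (merge_cfg U \<eta> \<xi> (tpar v)) (merge_cfg U \<eta> \<xi> v)"
    proof (cases "v \<in> U \<or> tpar v \<in> U")
      case True then show ?thesis using ER t hadj_sym by blast
    next
      case False then show ?thesis using ER v by (auto simp: outer_hom_def merge_cfg_def)
    qed
  qed
qed

definition outer_factor :: "(nat \<Rightarrow> real) \<Rightarrow> real \<Rightarrow> tvert set \<Rightarrow> nat \<Rightarrow> (tvert \<Rightarrow> nat) \<Rightarrow> real" where
  "outer_factor w c U R \<xi> = (if outer_hom U R \<xi> then 1 else 0) * c ^ card U *
     (\<Prod>v\<in>tball R - U. site_factor w (tball R) v (\<xi> v)) / walk_norm w"

lemma walk_weight_merge_cfg: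
  assumes w: "positive_weights w" and lc: "\<forall>j\<in>hnodes. lam_of w j = c * lam j"
    and U: "\<forall>v\<in>U. length (Rep_tvert v) < R" and fU: "finite U"
    and \<eta>: "\<eta> \<in> PiE U (\<lambda>_. hnodes)" and \<xi>: "\<forall>v\<in>tball R - U. \<xi> v \<in> hnodes"
  shows "walk_weight w troot (tball R) (merge_cfg U \<eta> \<xi>) = outer_factor w c U R \<xi> * spec_weight lam U \<xi> \<eta>"
proof -
  let ?z = "merge_cfg U \<eta> \<xi>"
  have UR: "U \<subseteq> tball R" using U by (auto simp: tball_def)
  have hn: "\<forall>v\<in>tball R. ?z v \<in> hnodes" using \<eta> \<xi> by (auto simp: merge_cfg_def PiE_def Pi_def)
  have inner: "(\<Prod>v\<in>U. site_factor w (tball R) v (?z v)) = c ^ card U * (\<Prod>v\<in>U. lam (\<eta> v))"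
  proof -
    have "(\<Prod>v\<in>U. site_factor w (tball R) v (?z v)) = (\<Prod>v\<in>U. c * lam (\<eta> v))"
      using \<eta> site_factor_inner[OF w] U lc by (intro prod.cong) (auto simp: merge_cfg_def PiE_def Pi_def)
    then show ?thesis by (simp add: prod.distrib)
  qed
  have outer: "(\<Prod>v\<in>tball R - U. site_factor w (tball R) v (?z v)) =
      (\<Prod>v\<in>tball R - U. site_factor w (tball R) v (\<xi> v))"
    by (rule prod.cong) (auto simp: merge_cfg_def)
  have split: "(\<Prod>v\<in>tball R. site_factor w (tball R) v (?z v)) =
      (\<Prod>v\<in>tball R - U. site_factor w (tball R) v (\<xi> v)) * (c ^ card U * (\<Prod>v\<in>U. lam (\<eta> v)))"
    using prod.subset_diff[OF UR finite_tball, of "\<lambda>v. site_factor w (tball R) v (?z v)"] inner outer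
    by simp
  let ?E = "\<forall>a b. a \<in> U \<and> tadj a b \<longrightarrow> hadj (?z a) (?z b)"
  have sw: "spec_weight lam U \<xi> \<eta> = (if ?E then (\<Prod>v\<in>U. lam (\<eta> v)) else 0)"
    by (simp add: spec_weight_def)
  have alg: "(if e \<and> r then 1 else 0) * (P * (C * L)) / K =
      (if r then 1 else 0) * C * P / K * (if e then L else 0)" for e r and P C L K :: real
    by (cases e; cases r) simp_all
  show ?thesis
    unfolding walk_weight_tball_factor[OF w hn] hom_on_tball_iff[OF U] split sw outer_factor_def
    by (rule alg)
qed

section \<open>The DLR equations\<close>

definition tboundary :: "tvert set \<Rightarrow> tvert set" where
  "tboundary U = {b. b \<notin> U \<and> (\<exists>a\<in>U. tadj a b)}"

definition radius_bound :: "tvert set \<Rightarrow> nat" where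
  "radius_bound U = Suc (Max (insert 0 ((\<lambda>v. length (Rep_tvert v)) ` U)))"

lemma radius_bound_gt: "finite U \<Longrightarrow> v \<in> U \<Longrightarrow> length (Rep_tvert v) < radius_bound U"
  unfolding radius_bound_def by (simp add: le_imp_less_Suc)

lemma tboundary_subset_tball: "finite U \<Longrightarrow> tboundary U \<subseteq> tball (radius_bound U)"
  unfolding tboundary_def tball_def using radius_bound_gt tadj_length_le by (fastforce simp: Suc_le_eq)

lemma spec_weight_boundary_cong:
  assumes "\<forall>v\<in>tboundary U. \<omega> v = \<omega>' v"
  shows "spec_weight lam U \<omega> \<eta> = spec_weight lam U \<omega>' \<eta>"
proof -
  have "merge_cfg U \<eta> \<omega> b = merge_cfg U \<eta> \<omega>' b" if "a \<in> U" "tadj a b" for a b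
    using assms that by (auto simp: merge_cfg_def tboundary_def)
  moreover have "merge_cfg U \<eta> \<omega> a = merge_cfg U \<eta> \<omega>' a" if "a \<in> U" for a
    using that by (simp add: merge_cfg_def)
  ultimately show ?thesis unfolding spec_weight_def by metis
qed

lemma spec_Z_boundary_cong: "\<forall>v\<in>tboundary U. \<omega> v = \<omega>' v \<Longrightarrow> spec_Z lam U \<omega> = spec_Z lam U \<omega>'"
  unfolding spec_Z_def using spec_weight_boundary_cong by (metis (no_types, lifting) sum.cong)

lemma spec_weight_nonneg:
  assumes "\<forall>j\<in>hnodes. lam j \<ge> 0" "\<eta> \<in> PiE U (\<lambda>_. hnodes)"
  shows "spec_weight lam U \<omega> \<eta> \<ge> 0"
  using assms unfolding spec_weight_def by (auto intro!: prod_nonneg simp: PiE_def Pi_def)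

lemma spec_weight_le_spec_Z:
  assumes "\<forall>j\<in>hnodes. lam j \<ge> 0" "\<eta> \<in> PiE U (\<lambda>_. hnodes)" "finite U"
  shows "spec_weight lam U \<omega> \<eta> \<le> spec_Z lam U \<omega>"
  unfolding spec_Z_def
  by (rule member_le_sum) (use assms spec_weight_nonneg in \<open>auto intro: finite_PiE\<close>)

lemma merge_cfg_restrict: "merge_cfg U (restrict \<xi> U) \<xi> = \<xi>"
  by (auto simp: merge_cfg_def fun_eq_iff)

lemma merge_cfg_in_space:
  "\<eta> \<in> PiE U (\<lambda>_. hnodes) \<Longrightarrow> \<omega> \<in> space cfg_space \<Longrightarrow> merge_cfg U \<eta> \<omega> \<in> space cfg_space"
  by (auto simp: space_cfg_space merge_cfg_def PiE_def Pi_def)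

lemma cyl_eq_merge_cfg_Union:
  assumes "U \<subseteq> D"
  shows "cyl (D - U) \<xi> = (\<Union>\<eta>\<in>PiE U (\<lambda>_. hnodes). cyl D (merge_cfg U \<eta> \<xi>))"
proof (intro set_eqI iffI)
  fix \<phi> assume h: "\<phi> \<in> cyl (D - U) \<xi>"
  then have "restrict \<phi> U \<in> PiE U (\<lambda>_. hnodes)" by (auto simp: cyl_def space_cfg_space)
  moreover have "\<phi> \<in> cyl D (merge_cfg U (restrict \<phi> U) \<xi>)" using h by (auto simp: cyl_def merge_cfg_def)
  ultimately show "\<phi> \<in> (\<Union>\<eta>\<in>PiE U (\<lambda>_. hnodes). cyl D (merge_cfg U \<eta> \<xi>))" by blast
qed (auto simp: cyl_def merge_cfg_def)

lemma disjoint_family_merge_cfg: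
  assumes "U \<subseteq> D"
  shows "disjoint_family_on (\<lambda>\<eta>. cyl D (merge_cfg U \<eta> \<xi>)) (PiE U (\<lambda>_. hnodes))"
proof (unfold disjoint_family_on_def, intro ballI impI)
  fix \<eta>1 \<eta>2 assume "\<eta>1 \<in> PiE U (\<lambda>_. hnodes)" "\<eta>2 \<in> PiE U (\<lambda>_. hnodes)" "\<eta>1 \<noteq> \<eta>2"
  then obtain v where "v \<in> U" "\<eta>1 v \<noteq> \<eta>2 v" by (metis PiE_ext)
  then show "cyl D (merge_cfg U \<eta>1 \<xi>) \<inter> cyl D (merge_cfg U \<eta>2 \<xi>) = {}"
    using assms by (auto simp: cyl_def merge_cfg_def)
qed

lemma walk_law_cyl_conditional:
  assumes W: "walk_law w troot \<mu>" and w: "positive_weights w" and lc: "\<forall>j\<in>hnodes. lam_of w j = c * lam j"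
    and lnn: "\<forall>j\<in>hnodes. lam j \<ge> 0" and fU: "finite U" and R: "radius_bound U \<le> R"
  shows "measure \<mu> (cyl (tball R) \<xi>) =
    (if restrict \<xi> U \<in> PiE U (\<lambda>_. hnodes)
     then spec_weight lam U \<xi> (restrict \<xi> U) / spec_Z lam U \<xi> * measure \<mu> (cyl (tball R - U) \<xi>) else 0)"
proof -
  interpret M: prob_space \<mu> using W by (simp add: walk_law_def)
  have Se: "sets \<mu> = sets cfg_space" using W by (rule walk_law_sets)
  have U: "\<forall>v\<in>U. length (Rep_tvert v) < R" using radius_bound_gt[OF fU] R by fastforce
  have UR: "U \<subseteq> tball R" using U by (auto simp: tball_def)
  show ?thesis
  proof (cases "\<forall>v\<in>tball R. \<xi> v \<in> hnodes")
    case False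
    then obtain v where v: "v \<in> tball R" "\<xi> v \<notin> hnodes" by blast
    then have "cyl (tball R) \<xi> = {}" by (rule cyl_eq_empty)
    moreover have "restrict \<xi> U \<notin> PiE U (\<lambda>_. hnodes) \<or> cyl (tball R - U) \<xi> = {}"
      using v cyl_eq_empty[of v "tball R - U" \<xi>] by (cases "v \<in> U") (auto simp: PiE_def Pi_def)
    ultimately show ?thesis by auto
  next
    case True
    have rin: "restrict \<xi> U \<in> PiE U (\<lambda>_. hnodes)" using True UR by auto
    let ?K = "outer_factor w c U R \<xi>"
    have K: "measure \<mu> (cyl (tball R) (merge_cfg U \<eta> \<xi>)) = ?K * spec_weight lam U \<xi> \<eta>"
      if "\<eta> \<in> PiE U (\<lambda>_. hnodes)" for \<eta>
      using W rooted_subtree_tball walk_weight_merge_cfg[OF w lc U fU that] True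
      by (simp add: walk_law_iff)
    have "measure \<mu> (cyl (tball R - U) \<xi>) =
        (\<Sum>\<eta>\<in>PiE U (\<lambda>_. hnodes). measure \<mu> (cyl (tball R) (merge_cfg U \<eta> \<xi>)))"
      unfolding cyl_eq_merge_cfg_Union[OF UR]
      by (rule M.finite_measure_finite_Union)
        (use Se cyl_in_sets finite_tball disjoint_family_merge_cfg[OF UR] fU in \<open>auto intro: finite_PiE\<close>)
    also have "\<dots> = ?K * spec_Z lam U \<xi>"
      unfolding spec_Z_def by (simp add: K sum_distrib_left)
    finally have D: "measure \<mu> (cyl (tball R - U) \<xi>) = ?K * spec_Z lam U \<xi>" .
    have L: "measure \<mu> (cyl (tball R) \<xi>) = ?K * spec_weight lam U \<xi> (restrict \<xi> U)"
      using K[OF rin] by (simp add: merge_cfg_restrict)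
    have "spec_Z lam U \<xi> = 0 \<Longrightarrow> spec_weight lam U \<xi> (restrict \<xi> U) = 0"
      using spec_weight_le_spec_Z[OF lnn rin fU, of \<xi>] spec_weight_nonneg[OF lnn rin, of \<xi>] by simp
    then show ?thesis using L D rin by auto
  qed
qed

lemma measurable_restrict_cfg:
  assumes "finite D"
  shows "(\<lambda>\<omega>. restrict \<omega> D) \<in> measurable cfg_space (count_space (PiE D (\<lambda>_. hnodes)))"
proof (subst measurable_count_space_eq2, intro finite_PiE assms finite_hnodes, intro conjI ballI)
  show "(\<lambda>\<omega>. restrict \<omega> D) \<in> space cfg_space \<rightarrow> PiE D (\<lambda>_. hnodes)" by (auto simp: space_cfg_space)
  fix \<xi> assume \<xi>: "\<xi> \<in> PiE D (\<lambda>_. hnodes)"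
  have "(\<lambda>\<omega>. restrict \<omega> D) -` {\<xi>} \<inter> space cfg_space = cyl D \<xi>"
    using \<xi> by (auto simp: cyl_def PiE_def extensional_def fun_eq_iff)
  then show "(\<lambda>\<omega>. restrict \<omega> D) -` {\<xi>} \<inter> space cfg_space \<in> sets cfg_space"
    using cyl_in_sets assms by simp
qed

lemma borel_measurable_finite_dependence:
  fixes f :: "(tvert \<Rightarrow> nat) \<Rightarrow> real"
  assumes D: "finite D"
    and dep: "\<And>\<omega> \<omega>'. \<omega> \<in> space cfg_space \<Longrightarrow> \<omega>' \<in> space cfg_space \<Longrightarrow> (\<forall>v\<in>D. \<omega> v = \<omega>' v) \<Longrightarrow> f \<omega> = f \<omega>'"
  shows "f \<in> borel_measurable cfg_space"
proof -
  define h where "h \<xi> = f (merge_cfg D \<xi> (\<lambda>_. 1))" for \<xi>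
  have "(\<lambda>\<omega>. h (restrict \<omega> D)) \<in> borel_measurable cfg_space"
    by (rule measurable_compose[OF measurable_restrict_cfg[OF D]]) simp
  moreover have "h (restrict \<omega> D) = f \<omega>" if \<omega>: "\<omega> \<in> space cfg_space" for \<omega>
  proof -
    have "merge_cfg D (restrict \<omega> D) (\<lambda>_. 1) \<in> space cfg_space"
      using \<omega> one_in_hnodes by (auto simp: space_cfg_space merge_cfg_def)
    then show ?thesis unfolding h_def by (rule dep) (use \<omega> in \<open>auto simp: merge_cfg_def\<close>)
  qed
  ultimately show ?thesis using measurable_cong by (metis (no_types, lifting))
qed

lemma measurable_merge_cfg:
  assumes \<eta>: "\<eta> \<in> PiE U (\<lambda>_. hnodes)"
  shows "(\<lambda>\<omega>. merge_cfg U \<eta> \<omega>) \<in> measurable cfg_space cfg_space"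
proof -
  have "(\<lambda>\<omega> v. merge_cfg U \<eta> \<omega> v) \<in> measurable cfg_space (Pi\<^sub>M UNIV (\<lambda>_. count_space hnodes))"
  proof (rule measurable_PiM_single')
    fix v :: tvert
    show "(\<lambda>\<omega>. merge_cfg U \<eta> \<omega> v) \<in> measurable cfg_space (count_space hnodes)"
      using \<eta> by (cases "v \<in> U") (simp_all add: merge_cfg_def PiE_def Pi_def measurable_spin)
  qed (use \<eta> in \<open>auto simp: space_cfg_space merge_cfg_def PiE_def Pi_def\<close>)
  then show ?thesis by (simp add: cfg_space_def)
qed

definition spec_prob :: "(nat \<Rightarrow> real) \<Rightarrow> tvert set \<Rightarrow> (tvert \<Rightarrow> nat) \<Rightarrow> (tvert \<Rightarrow> nat) \<Rightarrow> real" where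
  "spec_prob lam U \<eta> \<omega> = spec_weight lam U \<omega> \<eta> / spec_Z lam U \<omega>"

text \<open>The part of the specification \<open>\<mu>\<gamma>\<^sub>U\<close> in which the spins on \<open>U\<close> are \<open>\<eta>\<close>; the DLR
  equation says that \<open>\<mu>\<close> is the sum of these finite measures.\<close>
definition spec_kernel :: "(tvert \<Rightarrow> nat) measure \<Rightarrow> (nat \<Rightarrow> real) \<Rightarrow> tvert set \<Rightarrow> (tvert \<Rightarrow> nat) \<Rightarrow>
    (tvert \<Rightarrow> nat) measure" where
  "spec_kernel \<mu> lam U \<eta> =
    distr (density \<mu> (\<lambda>\<omega>. ennreal (spec_prob lam U \<eta> \<omega>))) cfg_space (\<lambda>\<omega>. merge_cfg U \<eta> \<omega>)"

lemma borel_measurable_spec_prob: "finite U \<Longrightarrow> spec_prob lam U \<eta> \<in> borel_measurable cfg_space"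
proof -
  assume fU: "finite U"
  have fb: "finite (tboundary U)" using tboundary_subset_tball[OF fU] finite_tball finite_subset by blast
  show ?thesis
  proof (rule borel_measurable_finite_dependence[OF fb])
    fix \<omega> \<omega>' :: "tvert \<Rightarrow> nat"
    assume a: "\<forall>v\<in>tboundary U. \<omega> v = \<omega>' v"
    show "spec_prob lam U \<eta> \<omega> = spec_prob lam U \<eta> \<omega>'"
      unfolding spec_prob_def spec_weight_boundary_cong[OF a] spec_Z_boundary_cong[OF a] ..
  qed
qed

lemma spec_prob_bounds:
  assumes "\<forall>j\<in>hnodes. lam j \<ge> 0" "\<eta> \<in> PiE U (\<lambda>_. hnodes)" "finite U"
  shows "0 \<le> spec_prob lam U \<eta> \<omega> \<and> spec_prob lam U \<eta> \<omega> \<le> 1"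
proof -
  have "0 \<le> spec_weight lam U \<omega> \<eta>" "spec_weight lam U \<omega> \<eta> \<le> spec_Z lam U \<omega>"
    using spec_weight_nonneg[OF assms(1,2)] spec_weight_le_spec_Z[OF assms] by auto
  then show ?thesis unfolding spec_prob_def by (auto simp: divide_le_eq_1)
qed

lemma sets_spec_kernel [simp]: "sets (spec_kernel \<mu> lam U \<eta>) = sets cfg_space"
  by (simp add: spec_kernel_def)

lemma
  assumes P: "prob_space \<mu>" and Se: "sets \<mu> = sets cfg_space"
    and lnn: "\<forall>j\<in>hnodes. lam j \<ge> 0" and \<eta>: "\<eta> \<in> PiE U (\<lambda>_. hnodes)" and fU: "finite U"
  shows measure_spec_kernel: "\<And>B. B \<in> sets cfg_space \<Longrightarrow> measure (spec_kernel \<mu> lam U \<eta>) B =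
      (\<integral>\<omega>. spec_prob lam U \<eta> \<omega> * indicator B (merge_cfg U \<eta> \<omega>) \<partial>\<mu>)"
    and integrable_spec_prob_indicator: "\<And>B. B \<in> sets cfg_space \<Longrightarrow>
      integrable \<mu> (\<lambda>\<omega>. spec_prob lam U \<eta> \<omega> * indicator B (merge_cfg U \<eta> \<omega>))"
    and finite_measure_spec_kernel: "finite_measure (spec_kernel \<mu> lam U \<eta>)"
proof -
  interpret M: prob_space \<mu> by (rule P)
  have sp: "space \<mu> = space cfg_space" using Se by (rule sets_eq_imp_space_eq)
  let ?g = "spec_prob lam U \<eta>" let ?m = "\<lambda>\<omega>. merge_cfg U \<eta> \<omega>"
  have gm: "?g \<in> borel_measurable \<mu>"
    using Se borel_measurable_spec_prob[OF fU] by (rule measurable_cfg_space_cong)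
  have mm: "?m \<in> measurable \<mu> cfg_space"
    using Se measurable_merge_cfg[OF \<eta>] by (rule measurable_cfg_space_cong)
  have mmd: "?m \<in> measurable (density \<mu> (\<lambda>\<omega>. ennreal (?g \<omega>))) cfg_space"
    using mm by (simp add: measurable_cong_sets[OF sets_density refl])
  have bnd: "\<And>\<omega>. 0 \<le> ?g \<omega> \<and> ?g \<omega> \<le> 1" using spec_prob_bounds[OF lnn \<eta> fU] by blast
  have indm: "(\<lambda>\<omega>. indicator B (?m \<omega>) :: real) \<in> borel_measurable \<mu>" if "B \<in> sets cfg_space" for B
    using measurable_compose[OF mm borel_measurable_indicator[OF that]] by (simp add: comp_def)
  show intg: "integrable \<mu> (\<lambda>\<omega>. ?g \<omega> * indicator B (?m \<omega>))" if "B \<in> sets cfg_space" for B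
  proof (rule M.integrable_const_bound[where B=1])
    show "AE x in \<mu>. norm (?g x * indicator B (?m x)) \<le> 1" using bnd by (auto simp: indicator_def)
    show "(\<lambda>\<omega>. ?g \<omega> * indicator B (?m \<omega>)) \<in> borel_measurable \<mu>" using gm indm[OF that] by simp
  qed
  have eme: "emeasure (spec_kernel \<mu> lam U \<eta>) B = (\<integral>\<^sup>+\<omega>. ennreal (?g \<omega> * indicator B (?m \<omega>)) \<partial>\<mu>)"
    if B: "B \<in> sets cfg_space" for B
  proof -
    have "emeasure (spec_kernel \<mu> lam U \<eta>) B =
        emeasure (density \<mu> (\<lambda>\<omega>. ennreal (?g \<omega>))) (?m -` B \<inter> space \<mu>)"
      unfolding spec_kernel_def by (subst emeasure_distr[OF mmd B]) simp
    also have "\<dots> = (\<integral>\<^sup>+\<omega>. ennreal (?g \<omega>) * indicator (?m -` B \<inter> space \<mu>) \<omega> \<partial>\<mu>)"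
      by (rule emeasure_density) (use gm measurable_sets[OF mm B] in auto)
    also have "\<dots> = (\<integral>\<^sup>+\<omega>. ennreal (?g \<omega> * indicator B (?m \<omega>)) \<partial>\<mu>)"
      by (rule nn_integral_cong) (use bnd in \<open>auto simp: indicator_def\<close>)
    finally show ?thesis .
  qed
  show "measure (spec_kernel \<mu> lam U \<eta>) B = (\<integral>\<omega>. ?g \<omega> * indicator B (?m \<omega>) \<partial>\<mu>)"
    if B: "B \<in> sets cfg_space" for B
    unfolding measure_def eme[OF B]
    by (rule enn2real_nn_integral_eq_integral) (use bnd gm indm[OF B] in auto)
  show "finite_measure (spec_kernel \<mu> lam U \<eta>)"
  proof (rule finite_measureI)
    have "emeasure (spec_kernel \<mu> lam U \<eta>) (space (spec_kernel \<mu> lam U \<eta>)) =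
        (\<integral>\<^sup>+\<omega>. ennreal (?g \<omega> * indicator (space cfg_space) (?m \<omega>)) \<partial>\<mu>)"
      using eme[of "space cfg_space"] by (simp add: spec_kernel_def)
    also have "\<dots> \<le> (\<integral>\<^sup>+\<omega>. 1 \<partial>\<mu>)"
      by (rule nn_integral_mono) (use bnd in \<open>auto simp: indicator_def\<close>)
    also have "\<dots> = 1" by (simp add: M.emeasure_space_1)
    finally show "emeasure (spec_kernel \<mu> lam U \<eta>) (space (spec_kernel \<mu> lam U \<eta>)) \<noteq> \<infinity>"
      by (auto simp: top_unique)
  qed
qed

lemma measure_spec_kernel_cyl:
  assumes P: "prob_space \<mu>" "sets \<mu> = sets cfg_space" and lnn: "\<forall>j\<in>hnodes. lam j \<ge> 0"
    and \<eta>: "\<eta> \<in> PiE U (\<lambda>_. hnodes)" and D: "finite D" "U \<subseteq> D" "tboundary U \<subseteq> D" and fU: "finite U"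
  shows "measure (spec_kernel \<mu> lam U \<eta>) (cyl D \<xi>) =
    (if \<eta> = restrict \<xi> U then spec_prob lam U \<eta> \<xi> * measure \<mu> (cyl (D - U) \<xi>) else 0)"
proof -
  have sp: "space \<mu> = space cfg_space" using P(2) by (rule sets_eq_imp_space_eq)
  let ?D = "cyl (D - U) \<xi>"
  have "measure (spec_kernel \<mu> lam U \<eta>) (cyl D \<xi>) =
      (\<integral>\<omega>. spec_prob lam U \<eta> \<omega> * indicator (cyl D \<xi>) (merge_cfg U \<eta> \<omega>) \<partial>\<mu>)"
    by (rule measure_spec_kernel[OF P lnn \<eta> fU cyl_in_sets[OF D(1)]])
  also have "\<dots> = (\<integral>\<omega>. (if \<eta> = restrict \<xi> U then spec_prob lam U \<eta> \<xi> else 0) * indicator ?D \<omega> \<partial>\<mu>)"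
  proof (rule Bochner_Integration.integral_cong[OF refl])
    fix \<omega> assume \<omega>: "\<omega> \<in> space \<mu>"
    have "merge_cfg U \<eta> \<omega> \<in> space cfg_space" using merge_cfg_in_space[OF \<eta>] \<omega> sp by simp
    then have e1: "merge_cfg U \<eta> \<omega> \<in> cyl D \<xi> \<longleftrightarrow> (\<forall>v\<in>U. \<eta> v = \<xi> v) \<and> \<omega> \<in> ?D"
      using \<omega> sp D(2) by (auto simp: cyl_def merge_cfg_def)
    have e2: "(\<forall>v\<in>U. \<eta> v = \<xi> v) \<longleftrightarrow> \<eta> = restrict \<xi> U"
      using \<eta> by (auto simp: PiE_def extensional_def fun_eq_iff)
    have e3: "spec_prob lam U \<eta> \<omega> = spec_prob lam U \<eta> \<xi>" if "\<omega> \<in> ?D"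
    proof -
      have a: "\<forall>v\<in>tboundary U. \<omega> v = \<xi> v" using that D(3) by (auto simp: cyl_def tboundary_def)
      show ?thesis unfolding spec_prob_def spec_weight_boundary_cong[OF a] spec_Z_boundary_cong[OF a] ..
    qed
    show "spec_prob lam U \<eta> \<omega> * indicator (cyl D \<xi>) (merge_cfg U \<eta> \<omega>) =
        (if \<eta> = restrict \<xi> U then spec_prob lam U \<eta> \<xi> else 0) * indicator ?D \<omega>"
      using e1 e2 e3 by (auto simp: indicator_def)
  qed
  also have "\<dots> = (if \<eta> = restrict \<xi> U then spec_prob lam U \<eta> \<xi> else 0) * measure \<mu> ?D"
    using cyl_in_sets[of "D - U" \<xi>] D(1) P(2) by (simp add: Int_absorb2 sets.sets_into_space sp)
  finally show ?thesis by simp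
qed

lemma walk_law_spec_kernel_cyl:
  assumes W: "walk_law w troot \<mu>" and w: "positive_weights w" and lc: "\<forall>j\<in>hnodes. lam_of w j = c * lam j"
    and lnn: "\<forall>j\<in>hnodes. lam j \<ge> 0" and fU: "finite U" and R: "radius_bound U \<le> R"
  shows "measure \<mu> (cyl (tball R) \<xi>) =
    (\<Sum>\<eta>\<in>PiE U (\<lambda>_. hnodes). measure (spec_kernel \<mu> lam U \<eta>) (cyl (tball R) \<xi>))"
proof -
  have P: "prob_space \<mu>" "sets \<mu> = sets cfg_space" using W by (auto simp: walk_law_def)
  have "U \<subseteq> tball R" using radius_bound_gt[OF fU] R by (fastforce simp: tball_def)
  moreover have "tboundary U \<subseteq> tball R" using tboundary_subset_tball[OF fU] tball_mono[OF R] by blast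
  ultimately have "(\<Sum>\<eta>\<in>PiE U (\<lambda>_. hnodes). measure (spec_kernel \<mu> lam U \<eta>) (cyl (tball R) \<xi>)) =
      (\<Sum>\<eta>\<in>PiE U (\<lambda>_. hnodes).
        if \<eta> = restrict \<xi> U then spec_prob lam U \<eta> \<xi> * measure \<mu> (cyl (tball R - U) \<xi>) else 0)"
    using measure_spec_kernel_cyl[OF P lnn _ finite_tball _ _ fU] by (intro sum.cong) auto
  also have "\<dots> = measure \<mu> (cyl (tball R) \<xi>)"
    using walk_law_cyl_conditional[OF W w lc lnn fU R] by (simp add: sum.delta' fU finite_PiE spec_prob_def)
  finally show ?thesis by simp
qed

lemma measure_eq_sum_measures_generator:
  fixes M :: "'a measure" and N :: "'i \<Rightarrow> 'a measure"
  assumes G: "Int_stable G" "G \<subseteq> Pow \<Omega>"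
    and M: "finite_measure M" "sets M = sigma_sets \<Omega> G"
    and N: "finite I" "\<And>i. i \<in> I \<Longrightarrow> finite_measure (N i)" "\<And>i. i \<in> I \<Longrightarrow> sets (N i) = sigma_sets \<Omega> G"
    and top: "measure M \<Omega> = (\<Sum>i\<in>I. measure (N i) \<Omega>)"
    and gen: "\<And>A. A \<in> G \<Longrightarrow> measure M A = (\<Sum>i\<in>I. measure (N i) A)"
    and A: "A \<in> sigma_sets \<Omega> G"
  shows "measure M A = (\<Sum>i\<in>I. measure (N i) A)"
  using G(1,2) A
proof (induction rule: sigma_sets_induct_disjoint)
  case (basic A) then show ?case by (rule gen)
next
  case empty then show ?case by simp
next
  case (compl A)
  have space: "space M = \<Omega>" "\<And>i. i \<in> I \<Longrightarrow> space (N i) = \<Omega>"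
    using M(2) N(3) G(2) sets_eq_imp_space_eq[of _ "sigma \<Omega> G"] by (auto simp: sets_measure_of space_measure_of)
  have "measure M (\<Omega> - A) = measure M \<Omega> - measure M A"
    using finite_measure.finite_measure_compl[OF M(1), of A] compl(1) M(2) space by simp
  also have "\<dots> = (\<Sum>i\<in>I. measure (N i) \<Omega> - measure (N i) A)"
    using top compl(2) by (simp add: sum_subtractf)
  also have "\<dots> = (\<Sum>i\<in>I. measure (N i) (\<Omega> - A))"
    using finite_measure.finite_measure_compl[OF N(2), of _ A] compl(1) N(3) space by (intro sum.cong) auto
  finally show ?case .
next
  case (union F)
  have "(\<lambda>n. measure M (F n)) sums measure M (\<Union>n. F n)"
    using finite_measure.finite_measure_UNION[OF M(1)] union(1,2) M(2) by auto
  moreover have "(\<lambda>n. \<Sum>i\<in>I. measure (N i) (F n)) sums (\<Sum>i\<in>I. measure (N i) (\<Union>n. F n))"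
    using finite_measure.finite_measure_UNION[OF N(2)] union(1,2) N(3) by (intro sums_sum) auto
  ultimately show ?case using union(3) by (simp add: sums_unique2)
qed

lemma measure_space_cfg_space_sum_cyl:
  assumes "finite_measure N" "sets N = sets cfg_space" "finite D"
  shows "measure N (space cfg_space) = (\<Sum>\<xi>\<in>PiE D (\<lambda>_. hnodes). measure N (cyl D \<xi>))"
  by (subst space_cfg_space_eq_cyl_Union[of D], rule finite_measure.finite_measure_finite_Union[OF assms(1)])
    (use assms cyl_in_sets disjoint_family_cyl in \<open>auto intro: finite_PiE\<close>)

lemma walk_law_spec_kernel:
  assumes W: "walk_law w troot \<mu>" and w: "positive_weights w" and lc: "\<forall>j\<in>hnodes. lam_of w j = c * lam j"
    and lnn: "\<forall>j\<in>hnodes. lam j \<ge> 0" and fU: "finite U" and A: "A \<in> sets cfg_space"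
  shows "measure \<mu> A = (\<Sum>\<eta>\<in>PiE U (\<lambda>_. hnodes). measure (spec_kernel \<mu> lam U \<eta>) A)"
proof -
  have P: "prob_space \<mu>" "sets \<mu> = sets cfg_space" using W by (auto simp: walk_law_def)
  let ?I = "PiE U (\<lambda>_. hnodes)" and ?R = "radius_bound U"
  have N: "\<And>\<eta>. \<eta> \<in> ?I \<Longrightarrow> finite_measure (spec_kernel \<mu> lam U \<eta>)"
    "\<And>\<eta>. \<eta> \<in> ?I \<Longrightarrow> sets (spec_kernel \<mu> lam U \<eta>) = sets cfg_space"
    using finite_measure_spec_kernel[OF P lnn _ fU] by auto
  have gen: "measure \<mu> B = (\<Sum>\<eta>\<in>?I. measure (spec_kernel \<mu> lam U \<eta>) B)" if "B \<in> tball_cylinders ?R" for B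
    using that walk_law_spec_kernel_cyl[OF W w lc lnn fU] by (auto simp: tball_cylinders_def)
  show ?thesis
  proof (rule measure_eq_sum_measures_generator[OF Int_stable_tball_cylinders tball_cylinders_Pow])
    show "finite_measure \<mu>" using P(1) by (rule prob_space.finite_measure)
    let ?X = "PiE (tball ?R) (\<lambda>_. hnodes)"
    have "measure \<mu> (space cfg_space) = (\<Sum>\<xi>\<in>?X. measure \<mu> (cyl (tball ?R) \<xi>))"
      using P by (intro measure_space_cfg_space_sum_cyl finite_tball prob_space.finite_measure)
    also have "\<dots> = (\<Sum>\<xi>\<in>?X. \<Sum>\<eta>\<in>?I. measure (spec_kernel \<mu> lam U \<eta>) (cyl (tball ?R) \<xi>))"
      using gen by (intro sum.cong refl) (auto simp: tball_cylinders_def)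
    also have "\<dots> = (\<Sum>\<eta>\<in>?I. \<Sum>\<xi>\<in>?X. measure (spec_kernel \<mu> lam U \<eta>) (cyl (tball ?R) \<xi>))"
      by (rule sum.swap)
    also have "\<dots> = (\<Sum>\<eta>\<in>?I. measure (spec_kernel \<mu> lam U \<eta>) (space cfg_space))"
      using N by (intro sum.cong refl measure_space_cfg_space_sum_cyl[symmetric] finite_tball) auto
    finally show "measure \<mu> (space cfg_space) = (\<Sum>\<eta>\<in>?I. measure (spec_kernel \<mu> lam U \<eta>) (space cfg_space))" .
  qed (use P N gen A fU sets_cfg_space_tball_cylinders in \<open>auto intro: finite_PiE\<close>)
qed

lemma walk_law_DLR:
  assumes W: "walk_law w troot \<mu>" and w: "positive_weights w" and lc: "\<forall>j\<in>hnodes. lam_of w j = c * lam j"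
    and lnn: "\<forall>j\<in>hnodes. lam j \<ge> 0" and fU: "finite U" and A: "A \<in> sets cfg_space"
  shows "measure \<mu> A = (\<integral>\<omega>. (\<Sum>\<eta>\<in>PiE U (\<lambda>_. hnodes).
             spec_weight lam U \<omega> \<eta> / spec_Z lam U \<omega> * indicator A (merge_cfg U \<eta> \<omega>)) \<partial>\<mu>)"
proof -
  have P: "prob_space \<mu>" "sets \<mu> = sets cfg_space" using W by (auto simp: walk_law_def)
  have "measure \<mu> A = (\<Sum>\<eta>\<in>PiE U (\<lambda>_. hnodes). measure (spec_kernel \<mu> lam U \<eta>) A)"
    by (rule walk_law_spec_kernel[OF W w lc lnn fU A])
  also have "\<dots> = (\<Sum>\<eta>\<in>PiE U (\<lambda>_. hnodes). \<integral>\<omega>. spec_prob lam U \<eta> \<omega> * indicator A (merge_cfg U \<eta> \<omega>) \<partial>\<mu>)"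
    by (rule sum.cong[OF refl]) (rule measure_spec_kernel[OF P lnn _ fU A])
  also have "\<dots> = (\<integral>\<omega>. (\<Sum>\<eta>\<in>PiE U (\<lambda>_. hnodes). spec_prob lam U \<eta> \<omega> * indicator A (merge_cfg U \<eta> \<omega>)) \<partial>\<mu>)"
    by (rule Bochner_Integration.integral_sum[symmetric]) (rule integrable_spec_prob_indicator[OF P lnn _ fU A])
  finally show ?thesis by (simp add: spec_prob_def)
qed

section \<open>The walk lives on homomorphisms\<close>

lemma countable_UNIV_tvert: "countable (UNIV :: tvert set)"
  by (rule countable_image_inj_on[of Rep_tvert]) (auto simp: inj_on_def Rep_tvert_inject)

definition bad_edge :: "tvert \<Rightarrow> (tvert \<Rightarrow> nat) set" where
  "bad_edge v = {\<phi> \<in> space cfg_space. \<not> hadj (\<phi> (tpar v)) (\<phi> v)}"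

lemma bad_edge_null:
  assumes W: "walk_law w troot \<mu>" and v: "v \<noteq> troot"
  shows "bad_edge v \<in> sets cfg_space \<and> measure \<mu> (bad_edge v) = 0"
proof -
  interpret M: prob_space \<mu> using W by (simp add: walk_law_def)
  have Se: "sets \<mu> = sets cfg_space" using W by (rule walk_law_sets)
  let ?T = "tball (length (Rep_tvert v))"
  let ?X = "{\<eta> \<in> PiE ?T (\<lambda>_. hnodes). \<not> hadj (\<eta> (tpar v)) (\<eta> v)}"
  have vT: "v \<in> ?T" "tpar v \<in> ?T" by (auto simp: tball_def Rep_tpar)
  have fX: "finite ?X"
    by (rule finite_subset[of _ "PiE ?T (\<lambda>_. hnodes)"]) (auto intro: finite_PiE finite_tball)
  have E: "bad_edge v = (\<Union>\<eta>\<in>?X. cyl ?T \<eta>)"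
  proof -
    have "bad_edge v = {\<phi> \<in> space cfg_space. restrict \<phi> ?T \<in> ?X}"
      using vT by (auto simp: bad_edge_def space_cfg_space)
    also have "\<dots> = (\<Union>\<eta>\<in>?X. cyl ?T \<eta>)" by (rule restrict_preimage_eq_cyl_Union) auto
    finally show ?thesis .
  qed
  have cs: "cyl ?T ` ?X \<subseteq> sets cfg_space" using cyl_in_sets finite_tball by auto
  have z: "measure \<mu> (cyl ?T \<eta>) = 0" if \<eta>: "\<eta> \<in> ?X" for \<eta>
  proof -
    have "step_prob w (\<eta> (tparent troot v)) (\<eta> v) = 0" using \<eta> v by (simp add: step_prob_def tparent_troot)
    then have "(\<Prod>u\<in>?T - {troot}. step_prob w (\<eta> (tparent troot u)) (\<eta> u)) = 0"
      using vT v finite_tball by (intro prod_zero) blast+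
    then show ?thesis using W rooted_subtree_tball by (simp add: walk_law_iff walk_weight_def)
  qed
  have "measure \<mu> (bad_edge v) = (\<Sum>\<eta>\<in>?X. measure \<mu> (cyl ?T \<eta>))"
    unfolding E
    by (rule M.finite_measure_finite_Union) (use fX cs Se disjoint_family_on_mono[OF _ disjoint_family_cyl] in auto)
  also have "\<dots> = 0" using z by simp
  finally show ?thesis unfolding E using fX cs by (auto intro: sets.finite_UN)
qed

lemma hom_set_eq: "hom_set = space cfg_space - (\<Union>v\<in>UNIV - {troot}. bad_edge v)"
proof (intro set_eqI iffI)
  fix \<phi> assume h: "\<phi> \<in> hom_set"
  have "\<phi> v \<in> hnodes" for v
  proof (cases "v = troot")
    case True
    have "tadj troot (tgen 0)" by (rule tadj_troot_tgen) simp
    then show ?thesis using h True hadj_in_hnodes by (auto simp: hom_set_def)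
  next
    case False
    have "tadj v (tpar v)" by (rule tadj_tpar[OF False])
    then show ?thesis using h hadj_in_hnodes by (auto simp: hom_set_def)
  qed
  moreover have "\<phi> \<notin> bad_edge v" if "v \<noteq> troot" for v
    using h tadj_tpar[OF that] tadj_sym by (auto simp: hom_set_def bad_edge_def)
  ultimately show "\<phi> \<in> space cfg_space - (\<Union>v\<in>UNIV - {troot}. bad_edge v)" by (auto simp: space_cfg_space)
next
  fix \<phi> assume "\<phi> \<in> space cfg_space - (\<Union>v\<in>UNIV - {troot}. bad_edge v)"
  then have e: "\<And>v. v \<noteq> troot \<Longrightarrow> hadj (\<phi> (tpar v)) (\<phi> v)" by (auto simp: bad_edge_def)
  show "\<phi> \<in> hom_set" unfolding hom_set_def
  proof (intro CollectI allI impI)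
    fix a b assume "tadj a b"
    with tadj_tpar_cases consider "a \<noteq> troot" "b = tpar a" | "b \<noteq> troot" "a = tpar b" by blast
    then show "hadj (\<phi> a) (\<phi> b)" using e hadj_sym by cases blast+
  qed
qed

lemma walk_law_hom_set:
  assumes W: "walk_law w troot \<mu>"
  shows "emeasure \<mu> hom_set = 1"
proof -
  interpret M: prob_space \<mu> using W by (simp add: walk_law_def)
  have Se: "sets \<mu> = sets cfg_space" using W by (rule walk_law_sets)
  have sp: "space \<mu> = space cfg_space" using Se by (rule sets_eq_imp_space_eq)
  have cnt: "countable (UNIV - {troot} :: tvert set)" using countable_UNIV_tvert countable_subset by blast
  have hs: "hom_set \<in> sets \<mu>" unfolding hom_set_eq Se
    using bad_edge_null[OF W] cnt by (intro sets.Diff sets.top sets.countable_UN'') auto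
  have "AE \<phi> in \<mu>. \<phi> \<notin> bad_edge v" if "v \<in> UNIV - {troot}" for v
    using bad_edge_null[OF W, of v] that Se by (intro AE_I'[of "bad_edge v"]) (auto simp: M.emeasure_eq_measure)
  then have "AE \<phi> in \<mu>. \<forall>v\<in>UNIV - {troot}. \<phi> \<notin> bad_edge v" by (subst AE_ball_countable[OF cnt]) auto
  then have "AE \<phi> in \<mu>. \<phi> \<in> hom_set" unfolding hom_set_eq by (rule AE_mp) (auto simp: sp intro!: AE_I2)
  then show ?thesis by (rule M.emeasure_eq_1_AE[OF hs])
qed

lemma walk_law_root_independent:
  assumes "positive_weights w" "walk_law w x \<mu>"
  shows "walk_law w y \<mu>"
proof -
  have "\<mu> = walk_measure w" by (rule walk_law_unique[OF walk_law_walk_measure[OF assms(1)] assms])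
  then show ?thesis using walk_law_any_root[OF walk_law_walk_measure[OF assms(1)] assms(1)] by simp
qed

lemma walk_law_simple_gibbs_invariant:
  assumes W: "walk_law w troot \<mu>" and w: "positive_weights w"
    and lc: "\<forall>j\<in>hnodes. lam_of w j = c * lam j" and lnn: "\<forall>j\<in>hnodes. lam j \<ge> 0"
  shows "simple_gibbs lam \<mu> \<and> invariant_measure \<mu>"
proof -
  have "gibbs lam \<mu>"
    unfolding gibbs_def using W walk_law_hom_set[OF W] walk_law_DLR[OF W w lc lnn]
    by (simp add: walk_law_def)
  then show ?thesis
    unfolding simple_gibbs_def invariant_measure_def
    using walk_law_indep_components[OF W w] walk_law_invariant[OF W w] by blast
qed

lemma hN_hinge: "hN (Suc 0) = {1,2}" "hN 2 = {1,2,3}" "hN 3 = {2,3}"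
  by (auto simp: hN_def hadj_def hnodes_def)

lemma hz_wA: "hz wA (Suc 0) = 6" "hz wA 2 = 7" "hz wA 3 = 3"
  by (simp_all add: hz_def hN_hinge wA_def)

lemma hz_wB: "hz wB (Suc 0) = 3" "hz wB 2 = 7" "hz wB 3 = 6"
  by (simp_all add: hz_def hN_hinge wB_def)

lemma positive_weights_wA: "positive_weights wA"
  by (simp add: positive_weights_def hnodes_def wA_def)

lemma positive_weights_wB: "positive_weights wB"
  by (simp add: positive_weights_def hnodes_def wB_def)

lemma lam_of_wA: "\<forall>i\<in>hnodes. lam_of wA i = 1/441 * lamT i"
  by (simp add: hnodes_def lam_of_def hz_wA wA_def lamT_def)

lemma lam_of_wB: "\<forall>i\<in>hnodes. lam_of wB i = 1/441 * lamT i"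
  by (simp add: hnodes_def lam_of_def hz_wB wB_def lamT_def)

lemma lamT_nonneg: "\<forall>j\<in>hnodes. lamT j \<ge> 0"
  by (simp add: hnodes_def lamT_def)

lemma root_prob_wA_wB: "root_prob wA 1 = 24/41" "root_prob wB 1 = 3/41"
  by (simp_all add: root_prob_def hnodes_def hz_wA hz_wB wA_def wB_def)

theorem mainTheorem6:
  shows "(\<exists>c>0. \<forall>i\<in>hnodes. lam_of wA i = c * lamT i) \<and>
         (\<exists>c>0. \<forall>i\<in>hnodes. lam_of wB i = c * lamT i) \<and>
         (\<forall>x. \<exists>\<mu>. walk_law wA x \<mu>) \<and>
         (\<forall>x. \<exists>\<mu>. walk_law wB x \<mu>) \<and>
         (\<forall>x x' \<mu> \<mu>'. walk_law wA x \<mu> \<longrightarrow> walk_law wB x' \<mu>' \<longrightarrow>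
            simple_gibbs lamT \<mu> \<and> invariant_measure \<mu> \<and>
            simple_gibbs lamT \<mu>' \<and> invariant_measure \<mu>' \<and> \<mu> \<noteq> \<mu>')"
proof (intro conjI allI impI)
  show "\<exists>c>0. \<forall>i\<in>hnodes. lam_of wA i = c * lamT i" "\<exists>c>0. \<forall>i\<in>hnodes. lam_of wB i = c * lamT i"
    using lam_of_wA lam_of_wB by (auto intro!: exI[of _ "1/441"])
  show "\<exists>\<mu>. walk_law wA x \<mu>" "\<exists>\<mu>. walk_law wB x \<mu>" for x
    using walk_law_any_root[OF walk_law_walk_measure] positive_weights_wA positive_weights_wB by blast+
next
  fix x x' \<mu> \<mu>' assume "walk_law wA x \<mu>" "walk_law wB x' \<mu>'"
  then have A: "walk_law wA troot \<mu>" and B: "walk_law wB troot \<mu>'"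
    using walk_law_root_independent positive_weights_wA positive_weights_wB by blast+
  show "simple_gibbs lamT \<mu>" "invariant_measure \<mu>"
    using walk_law_simple_gibbs_invariant[OF A positive_weights_wA lam_of_wA lamT_nonneg] by simp_all
  show "simple_gibbs lamT \<mu>'" "invariant_measure \<mu>'"
    using walk_law_simple_gibbs_invariant[OF B positive_weights_wB lam_of_wB lamT_nonneg] by simp_all
  show "\<mu> \<noteq> \<mu>'"
    using walk_law_cyl_singleton[OF A, of 1] walk_law_cyl_singleton[OF B, of 1] root_prob_wA_wB by auto
qed

end
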